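(* In the standing setting, assume (A1), (A3), (A4) and (A7), and consider the coupled chains. Then there exist $h_0>0$ and $C>0$, independent of $s,h,k$, such that for all $s\in\mathbb N_+$, $h\in(0,h_0)$ and all $k\ge1$, $$\mathbb E|X^{f,f}_k-X_k|^4\le C\frac{h^2}{s^2}.$$
   Context: Standing setting. Let $d,n\in\mathbb N_+$, $\beta\ge0$, and let $a:\mathbb R^d\to\mathbb R^d$, $b:\mathbb R^d\times\mathbb R^n\to\mathbb R^d$ be measurable. $|\cdot|$ is the Euclidean norm (Frobenius norm for matrices), $\nabla$ the Jacobian in $x$, $D^\alpha$ the partial derivative in $x$ for a multi-index $\alpha$. For each $s\in\mathbb N_+$ a law on $\mathbb R^n$ is given; a random variable with this law is a drift variable at level $s$ (generically $U^s$), and $\mathbb E[b(x,U^s)]=a(x)$ for all $x$. All constants below are independent of $s,x,y$. (A1) $|a(x)-a(y)|\le L|x-y|$; $\langle x-y,a(x)-a(y)\rangle\le-K|x-y|^2$ with $K>0$; $a\in C^2$ with $|D^\alpha a|\le C_{a^{(|\alpha|)}}$ for $|\alpha|=1,2$. (A2) $\mathbb E|b(x,U^s)-b(y,U^s)|^2\le\bar L^2|x-y|^2$. (A3) $\mathbb E|b(x,U^s)-a(x)|^2\le\sigma_s^2(1+|x|^2)$ with $\sigma_s^2\le\kappa/s$. (A4) $\mathbb E|b(x,U^s)-a(x)|^4\le\sigma^{(4)}_s(1+|x|^4)$ with $\sigma^{(4)}_s\le\kappa/s^2$. (A5) for every $u$, $x\mapsto b(x,u)$ is $C^2$ with $|D^\alpha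 b(x,u)|\le C_{b^{(2)}}$ for $|\alpha|=2$, and $\mathbb E|\nabla b(x,U^s)-\nabla a(x)|^4\le\sigma^{(4)}_s(1+|x|^4)$. (A6) $\mathbb E[D^\alpha b(x,U^s)]=D^\alpha a(x)$ for $|\alpha|\le2$. (A7) $|a(x)|^4\le L_0^{(4)}(1+|x|^4)$. (A8) every drift variable $U^{2s}$ at level $2s$ determines (measurably) two drift variables $U^{2s,1},U^{2s,2}$ at level $s$ with $b(x,U^{2s})=\frac12b(x,U^{2s,1})+\frac12b(x,U^{2s,2})$ for all $x$. Coupled chains. Fix $s\in\mathbb N_+$, $h>0$. Let $(Z_k)_{k\ge1}$ be i.i.d. $N(0,I_d)$, $(U^f_k)_{k\ge0}$ i.i.d. drift variables at level $2s$, and $X_0$ an $\mathbb R^d$-valued random variable with $\mathbb E|X_0|^4<\infty$, all independent; let $U^{f,1}_k,U^{f,2}_k$ be the level-$s$ variables given by (A8). Put $V^f_k=U^f_k$, $V^{c-}_k=U^{f,1}_k$, $V^{c+}_k=U^{f,2}_k$. For $j\in\{f,c-,c+\}$, all chains start at $X_0$: $X^{j,f}_{k+1}=X^{j,f}_k+hb(X^{j,f}_k,V^j_k)+\beta\sqrt hZ_{k+1}$ ($k\ge0$); for even $k\ge0$: $X^{j,c-}_{k+2}=X^{j,c-}_k+2hb(X^{j,c-}_k,V^j_k)+\beta\sqrt h(Z_{k+1}+Z_{k+2})$, $X^{j,c+}_{k+2}=X^{j,c+}_k+2hb(X^{j,c+}_k,V^j_{k+1})+\beta\sqrt h(Z_{k+1}+Z_{k+2})$.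 Exact-drift chains from $X_0$: $X_{k+1}=X_k+ha(X_k)+\beta\sqrt hZ_{k+1}$ and, for even $k$, $X^c_{k+2}=X^c_k+2ha(X^c_k)+\beta\sqrt h(Z_{k+1}+Z_{k+2})$. Averages: $\bar X^{j,c}_k=\frac12(X^{j,c-}_k+X^{j,c+}_k)$, $\bar X^{c,f}_k=\frac12(X^{c-,f}_k+X^{c+,f}_k)$. *)

theory Defs
  imports "HOL-Probability.Probability"
begin

definition std_gaussian_density :: "'a::euclidean_space \<Rightarrow> ennreal" where
  "std_gaussian_density x =
     ennreal ((2 * pi) powr (- real DIM('a) / 2) * exp (- (norm x)\<^sup>2 / 2))"

primrec sgd_chain ::
  "real \<Rightarrow> real \<Rightarrow> ('a::real_normed_vector \<Rightarrow> 'u \<Rightarrow> 'a) \<Rightarrow> ('w \<Rightarrow> 'a)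
    \<Rightarrow> (nat \<Rightarrow> 'w \<Rightarrow> 'a) \<Rightarrow> (nat \<Rightarrow> 'w \<Rightarrow> 'u) \<Rightarrow> nat \<Rightarrow> 'w \<Rightarrow> 'a" where
  "sgd_chain h \<beta> b X0 Z V 0 = X0"
| "sgd_chain h \<beta> b X0 Z V (Suc k) =
     (\<lambda>w. sgd_chain h \<beta> b X0 Z V k w + h *\<^sub>R b (sgd_chain h \<beta> b X0 Z V k w) (V k w)
            + (\<beta> * sqrt h) *\<^sub>R Z (Suc k) w)"

primrec exact_chain ::
  "real \<Rightarrow> real \<Rightarrow> ('a::real_normed_vector \<Rightarrow> 'a) \<Rightarrow> ('w \<Rightarrow> 'a)
    \<Rightarrow> (nat \<Rightarrow> 'w \<Rightarrow> 'a) \<Rightarrow> nat \<Rightarrow> 'w \<Rightarrow> 'a" where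
  "exact_chain h \<beta> a X0 Z 0 = X0"
| "exact_chain h \<beta> a X0 Z (Suc k) =
     (\<lambda>w. exact_chain h \<beta> a X0 Z k w + h *\<^sub>R a (exact_chain h \<beta> a X0 Z k w)
            + (\<beta> * sqrt h) *\<^sub>R Z (Suc k) w)"

text \<open>Index set for the family of independent random inputs: X_0, Z_k (k \<ge> 1), U_k (k \<ge> 0).\<close>
datatype rv_idx = IX0 | IZ nat | IU nat

definition input_sigmas ::
  "'w measure \<Rightarrow> ('w \<Rightarrow> 'a::topological_space) \<Rightarrow> (nat \<Rightarrow> 'w \<Rightarrow> 'a) \<Rightarrow> (nat \<Rightarrow> 'w \<Rightarrow> 'u::topological_space)
    \<Rightarrow> rv_idx \<Rightarrow> 'w set set" where
  "input_sigmas M X0 Z U i = (case i of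
      IX0 \<Rightarrow> sets (vimage_algebra (space M) X0 borel)
    | IZ k \<Rightarrow> sets (vimage_algebra (space M) (Z k) borel)
    | IU k \<Rightarrow> sets (vimage_algebra (space M) (U k) borel))"

definition input_index :: "rv_idx set" where
  "input_index = {IX0} \<union> {IZ k | k. k \<ge> 1} \<union> range IU"

end

theory Submission
  imports Defs
begin

text \<open>Write X for the exact-drift chain, Y for the chain with stochastic drift and e = Y - X.
  One step gives e' = D + \<xi> with D = e + h (a Y - a X) and \<xi> = h (b(Y, U) - a Y). Strong monotonicity
  and the Lipschitz bound give |D|^2 \<le> (1 - K h) |e|^2, while \<xi> is centred given the past, with second
  and fourth moments of order h^2/s (1 + |Y|^2) and h^4/s^2 (1 + |Y|^4). Expanding |D + \<xi>|^4 and
  integrating over the fresh drift variable first removes the term linear in \<xi>, and Young's inequality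
  yields E|e'|^4 \<le> (1 - K h/4) E|e|^4 + C h^3/s^2 (1 + E|X|^4). The same contraction, now with Gaussian
  noise, bounds E|X_k|^4 uniformly in k and h, so the recursion keeps E|e_k|^4 below a fixed multiple
  of h^2/s^2.\<close>

section \<open>Elementary inequalities\<close>

lemma norm_add_power2: "norm (x + y :: 'a::real_inner)^2 = norm x^2 + 2 * inner x y + norm y^2"
  by (simp add: power2_norm_eq_inner inner_add_left inner_add_right inner_commute)

lemma two_mult_le_weighted_squares:
  fixes e x y :: real
  assumes "e > 0"
  shows "2 * x * y \<le> e * x^2 + y^2 / e"
proof -
  have "0 \<le> (e * x - y)^2 / e" using assms by simp
  also have "\<dots> = e * x^2 + y^2 / e - 2 * x * y" using assms by (simp add: power2_eq_square field_simps)
  finally show ?thesis by simp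
qed

lemma norm_add_power4_le:
  fixes D \<xi> :: "'a::real_inner"
  shows "norm (D + \<xi>)^4
    \<le> (norm D^2)^2 + 4 * norm D^2 * inner D \<xi> + 8 * norm D^2 * norm \<xi>^2 + 3 * (norm \<xi>^2)^2"
proof -
  define p where "p = norm D^2"
  define w where "w = norm \<xi>^2"
  define r where "r = inner D \<xi>"
  have pw: "p \<ge> 0" "w \<ge> 0" by (auto simp: p_def w_def)
  have cs: "r^2 \<le> p * w" unfolding r_def p_def w_def
    using Cauchy_Schwarz_ineq by (simp add: power2_norm_eq_inner)
  have "2 * r \<le> p + w"
    using two_mult_le_weighted_squares[of 1 "norm D" "norm \<xi>"] norm_cauchy_schwarz[of D \<xi>]
    by (simp add: p_def w_def r_def)
  hence rw: "2 * (2 * r) * w \<le> 2 * (p + w) * w" using pw by (simp add: mult_right_mono)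
  have "norm (D + \<xi>)^4 = (norm (D + \<xi>)^2)^2" by simp
  also have "\<dots> = (p + 2 * r + w)^2" by (simp only: norm_add_power2 p_def r_def w_def)
  also have "\<dots> = p^2 + 4*p*r + 4*r^2 + 2*p*w + 2*(2*r)*w + w^2"
    by (simp add: power2_eq_square algebra_simps)
  also have "\<dots> \<le> p^2 + 4*p*r + 8*p*w + 3*w^2" using cs rw by (simp add: power2_eq_square algebra_simps)
  finally show ?thesis by (simp add: p_def r_def w_def)
qed

lemma norm_add_power4_plus_norm_diff_power4:
  fixes m v :: "'a::real_inner"
  shows "norm (m + v)^4 + norm (m - v)^4 \<le> 2 * (norm m^4 + 6 * norm m^2 * norm v^2 + norm v^4)"
proof -
  have plus: "norm (m + v)^2 = norm m^2 + 2 * inner m v + norm v^2" by (rule norm_add_power2)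
  have minus: "norm (m - v)^2 = norm m^2 - 2 * inner m v + norm v^2"
    using norm_add_power2[of m "-v"] by simp
  have cs: "inner m v ^2 \<le> norm m^2 * norm v^2"
    using Cauchy_Schwarz_ineq by (simp add: power2_norm_eq_inner)
  have "norm (m + v)^4 + norm (m - v)^4 = (norm (m + v)^2)^2 + (norm (m - v)^2)^2" by simp
  also have "\<dots> = 2 * (norm m^2 + norm v^2)^2 + 8 * (inner m v)^2"
    unfolding plus minus by (simp add: power2_eq_square algebra_simps)
  also have "\<dots> \<le> 2 * (norm m^2 + norm v^2)^2 + 8 * (norm m^2 * norm v^2)" using cs by simp
  also have "\<dots> = 2 * (norm m^4 + 6 * norm m^2 * norm v^2 + norm v^4)"
    by (simp add: power2_eq_square algebra_simps power4_eq_xxxx)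
  finally show ?thesis .
qed

lemma monotone_drift_contraction:
  fixes a :: "'a::real_inner \<Rightarrow> 'a"
  assumes lip: "norm (a y - a x) \<le> L * norm (y - x)" and L: "L \<ge> 0"
    and mon: "inner (y - x) (a y - a x) \<le> - K * (norm (y - x))\<^sup>2"
    and h: "h > 0" "h * L^2 \<le> K"
  shows "norm ((y - x) + h *\<^sub>R (a y - a x))^2 \<le> (1 - K * h) * norm (y - x)^2"
proof -
  define e where "e = norm (y - x)"
  have "norm (a y - a x)^2 \<le> (L * e)^2" using lip norm_ge_zero by (simp add: e_def power_mono)
  hence "h^2 * norm (a y - a x)^2 \<le> h^2 * (L * e)^2" by (simp add: mult_left_mono)
  also have "\<dots> = h * (h * L^2) * e^2" by (simp add: power2_eq_square algebra_simps)
  also have "\<dots> \<le> h * K * e^2" using h by (intro mult_right_mono mult_left_mono) auto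
  finally have quad: "h^2 * norm (a y - a x)^2 \<le> K * h * e^2" by (simp add: mult.commute)
  have lin: "2 * h * inner (y - x) (a y - a x) \<le> 2 * h * (- K * e^2)"
    using mon h by (intro mult_left_mono) (auto simp: e_def)
  have "norm ((y - x) + h *\<^sub>R (a y - a x))^2
      = e^2 + 2 * h * inner (y - x) (a y - a x) + h^2 * norm (a y - a x)^2"
    by (simp add: norm_add_power2 e_def power_mult_distrib abs_of_pos h(1))
  also have "\<dots> \<le> e^2 + 2 * h * (- K * e^2) + K * h * e^2"
    using lin quad by linarith
  also have "\<dots> = (1 - K * h) * e^2" by (simp add: algebra_simps)
  finally show ?thesis by (simp add: e_def)
qed

lemma monotone_drift_step_bound:
  fixes a :: "'a::real_inner \<Rightarrow> 'a"
  assumes lip: "norm (a x - a 0) \<le> L * norm x" and L: "L \<ge> 0"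
    and mon: "inner x (a x - a 0) \<le> - K * (norm x)\<^sup>2" and K: "K > 0"
    and h: "h > 0" "h \<le> 1" "h * (4 * L^2 + 1) \<le> K"
  shows "norm (x + h *\<^sub>R a x)^2
    \<le> (1 - K * h) * norm x^2 + h * (2 * norm (a 0)^2 / K + 2 * norm (a 0)^2)"
proof -
  define r where "r = norm x"
  define a0 where "a0 = norm (a 0)"
  define P where "P = inner x (a x)"
  define N where "N = norm (a x)"
  have r0: "r \<ge> 0" "a0 \<ge> 0" "N \<ge> 0" by (auto simp: r_def a0_def N_def)
  have "inner x (a 0) \<le> r * a0" unfolding r_def a0_def
    by (rule order_trans[OF _ norm_cauchy_schwarz]) simp
  with mon have P: "P \<le> - K * r^2 + r * a0" by (simp add: P_def r_def inner_diff_right)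
  have "N \<le> a0 + L * r" using lip norm_triangle_ineq2[of "a x" "a 0"]
    by (simp add: N_def a0_def r_def)
  hence "N^2 \<le> (a0 + L * r)^2" using r0 by (simp add: power_mono)
  also have "\<dots> \<le> 2 * a0^2 + 2 * L^2 * r^2"
    using two_mult_le_weighted_squares[of 1 a0 "L * r"] by (simp add: power2_eq_square algebra_simps)
  finally have N2: "N^2 \<le> 2 * a0^2 + 2 * L^2 * r^2" .
  have ar: "2 * r * a0 \<le> (K / 2) * r^2 + 2 * a0^2 / K"
    using two_mult_le_weighted_squares[of "K / 2" r a0] K by simp
  have eq: "norm (x + h *\<^sub>R a x)^2 = r^2 + 2 * h * P + h^2 * N^2"
    by (simp add: norm_add_power2 r_def P_def N_def power_mult_distrib abs_of_pos h(1))
  have "h^2 * N^2 \<le> h^2 * (2 * a0^2 + 2 * L^2 * r^2)" using N2 by (simp add: mult_left_mono)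
  moreover have "2 * h * P \<le> 2 * h * (- K * r^2 + r * a0)" using P h by simp
  moreover have "h * (2 * r * a0) \<le> h * ((K / 2) * r^2 + 2 * a0^2 / K)" using ar h by (simp add: mult_left_mono)
  moreover have "h^2 * (2 * L^2 * r^2) \<le> h * (K / 2) * r^2"
  proof -
    have "h * (2 * L^2) \<le> K / 2" using h by (simp add: algebra_simps)
    hence "h * (h * (2 * L^2) * r^2) \<le> h * ((K / 2) * r^2)"
      using h by (intro mult_left_mono mult_right_mono) auto
    thus ?thesis by (simp add: power2_eq_square algebra_simps)
  qed
  moreover have "h^2 * (2 * a0^2) \<le> h * (2 * a0^2)" using h by (simp add: power2_eq_square mult_right_mono)
  ultimately show ?thesis unfolding eq by (simp add: algebra_simps r_def[symmetric] a0_def[symmetric])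
qed

lemma square_of_affine_contraction_le:
  fixes q t h K A :: real
  assumes q: "0 \<le> q" "q \<le> (1 - K*h)*t + h*A" and t: "t \<ge> 0" and A: "A \<ge> 0"
    and K: "K > 0" and h: "h > 0" "h \<le> 1" "K*h \<le> 1"
  shows "q^2 \<le> (1 - 3*K*h/4)*t^2 + h*(A^2 + 4*A^2/K)"
proof -
  have "q^2 \<le> ((1 - K*h)*t + h*A)^2" using q by (simp add: power_mono)
  also have "\<dots> = (1-K*h)^2*t^2 + h*(2*(1-K*h)*A*t) + h^2*A^2"
    by (simp add: power2_eq_square algebra_simps)
  also have "\<dots> \<le> (1-K*h)*t^2 + h*(2*A*t) + h*A^2"
  proof -
    have "(1-K*h)^2 \<le> 1-K*h" using h K mult_left_le_one_le[of "1-K*h" "1-K*h"]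
      by (simp add: power2_eq_square)
    hence 1: "(1-K*h)^2*t^2 \<le> (1-K*h)*t^2" by (intro mult_right_mono) auto
    have "(1-K*h)*(2*A*t) \<le> 2*A*t" using h K A t by (intro mult_left_le_one_le) auto
    hence "2*(1-K*h)*A*t \<le> 2*A*t" by (simp add: algebra_simps)
    hence 2: "h*(2*(1-K*h)*A*t) \<le> h*(2*A*t)" using h by simp
    have 3: "h^2*A^2 \<le> h*A^2" using h by (simp add: power2_eq_square mult_right_mono)
    show ?thesis using 1 2 3 by simp
  qed
  also have "\<dots> \<le> (1-K*h)*t^2 + h*((K/4)*t^2 + 4*A^2/K) + h*A^2"
    using two_mult_le_weighted_squares[of "K/4" t A] K h
    by (intro add_mono mult_left_mono) (auto simp: ac_simps)
  also have "\<dots> = (1 - 3*K*h/4)*t^2 + h*(A^2 + 4*A^2/K)" by (simp add: algebra_simps)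
  finally show ?thesis .
qed

lemma exact_moment_recursion:
  fixes q t h K A \<beta> m :: real
  assumes q: "0 \<le> q" "q^2 \<le> (1 - 3*K*h/4)*t^2 + h*(A^2 + 4*A^2/K)" and t: "t \<ge> 0" and A: "A \<ge> 0"
    and K: "K > 0" and h: "h > 0" "h \<le> 1" "K*h \<le> 1" and m: "m \<ge> 0"
  shows "q^2 + 6*(\<beta>^2*h)*q*(1+m) + (\<beta>^2*h)^2*m
     \<le> (1 - K*h/2)*t^2 + h*(2*(A^2 + 4*A^2/K) + 36*(\<beta>^2*(1+m))^2/K + \<beta>^4*m)"
proof -
  have young: "6*(\<beta>^2*(1+m))*q \<le> (K/4)*q^2 + 36*(\<beta>^2*(1+m))^2/K"
    using two_mult_le_weighted_squares[of "K/4" q "3*(\<beta>^2*(1+m))"] K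
    by (simp add: power2_eq_square algebra_simps)
  have 1: "6*(\<beta>^2*h)*q*(1+m) \<le> h*((K/4)*q^2) + h*(36*(\<beta>^2*(1+m))^2/K)"
    using mult_left_mono[OF young, of h] h by (simp add: algebra_simps)
  have 2: "(\<beta>^2*h)^2*m \<le> h*(\<beta>^4*m)"
  proof -
    have "h^2 \<le> h" using h by (simp add: power2_eq_square mult_left_le_one_le)
    hence "h^2*(\<beta>^4*m) \<le> h*(\<beta>^4*m)" using m by (intro mult_right_mono) auto
    thus ?thesis by (simp add: power2_eq_square power4_eq_xxxx algebra_simps)
  qed
  have "(1 + K*h/4)*q^2 \<le> (1 + K*h/4)*((1 - 3*K*h/4)*t^2 + h*(A^2 + 4*A^2/K))"
    using q K h by (intro mult_left_mono) auto
  also have "\<dots> \<le> (1 - K*h/2)*t^2 + h*(2*(A^2 + 4*A^2/K))"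
  proof -
    have "(1 + K*h/4)*(1 - 3*K*h/4) \<le> 1 - K*h/2" using K h by (simp add: algebra_simps power2_eq_square)
    hence a: "(1 + K*h/4)*(1 - 3*K*h/4)*t^2 \<le> (1 - K*h/2)*t^2" by (intro mult_right_mono) auto
    have "0 \<le> h*(A^2 + 4*A^2/K)" using h K by simp
    hence b: "(1 + K*h/4)*(h*(A^2 + 4*A^2/K)) \<le> 2*(h*(A^2 + 4*A^2/K))"
      using h by (intro mult_right_mono) auto
    show ?thesis using add_mono[OF a b] by (simp add: algebra_simps)
  qed
  finally have 3: "(1 + K*h/4)*q^2 \<le> (1 - K*h/2)*t^2 + h*(2*(A^2 + 4*A^2/K))" .
  show ?thesis using 1 2 3 by (simp add: algebra_simps)
qed

lemma power4_le_of_le_add: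
  fixes E X Y :: real
  assumes "0 \<le> Y" "Y \<le> E + X"
  shows "Y^4 \<le> 8*E^4 + 8*X^4"
proof -
  have "Y^2 \<le> (E+X)^2" using assms by (simp add: power_mono)
  also have "\<dots> \<le> 2*E^2 + 2*X^2"
    using two_mult_le_weighted_squares[of 1 E X] by (simp add: power2_eq_square algebra_simps)
  finally have "(Y^2)^2 \<le> (2*E^2 + 2*X^2)^2" by (intro power_mono) auto
  also have "\<dots> \<le> 8*E^4 + 8*X^4"
    using two_mult_le_weighted_squares[of 1 "E^2" "X^2"] by (simp add: power2_eq_square power4_eq_xxxx algebra_simps)
  finally show ?thesis by simp
qed

lemma error_noise_terms_le:
  fixes p h K \<kappa> s Y :: real
  assumes p: "0 \<le> p" and K: "K > 0" and h: "h > 0" "h \<le> 1" and \<kappa>: "\<kappa> \<ge> 0" and s: "s \<ge> 1"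
  shows "8*p*(h^2*(\<kappa>/s)*(1+Y^2)) + 3*(h^4*(\<kappa>/s^2)*(1+Y^4))
    \<le> (K*h/2)*p^2 + (h^3/s^2)*(64*\<kappa>^2/K + 3*\<kappa>)*(1+Y^4)"
proof -
  define W where "W = h^2*(\<kappa>/s)*(1+Y^2)"
  have Kh: "K*h > 0" using K h by simp
  have 1: "8*p*W \<le> (K*h/2)*p^2 + 32*W^2/(K*h)"
    using two_mult_le_weighted_squares[of "K*h/2" p "4*W"] Kh by (simp add: power2_eq_square field_simps)
  have Y2: "(1+Y^2)^2 \<le> 2*(1+Y^4)"
    using two_mult_le_weighted_squares[of 1 1 "Y^2"] by (simp add: power2_eq_square power4_eq_xxxx algebra_simps)
  have "32*W^2/(K*h) = (h^3/s^2)*(32*\<kappa>^2/K)*(1+Y^2)^2"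
    using K h s by (simp add: W_def power2_eq_square field_simps power3_eq_cube)
  also have "\<dots> \<le> (h^3/s^2)*(32*\<kappa>^2/K)*(2*(1+Y^4))"
    using Y2 K h s by (intro mult_left_mono) auto
  finally have 2: "32*W^2/(K*h) \<le> (h^3/s^2)*(64*\<kappa>^2/K)*(1+Y^4)" by (simp add: algebra_simps)
  have "h^4 \<le> h^3" using h by (simp add: power_decreasing)
  hence "h^4*(3*\<kappa>/s^2*(1+Y^4)) \<le> h^3*(3*\<kappa>/s^2*(1+Y^4))" using \<kappa> s by (intro mult_right_mono) auto
  hence 3: "3*(h^4*(\<kappa>/s^2)*(1+Y^4)) \<le> (h^3/s^2)*(3*\<kappa>)*(1+Y^4)" by (simp add: algebra_simps)
  show ?thesis using 1 2 3 by (simp add: W_def algebra_simps)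
qed

lemma error_moment_recursion:
  fixes p E X Y h K \<kappa> s :: real
  assumes p: "0 \<le> p" "p \<le> (1 - K*h)*E^2" and Y: "0 \<le> Y" "Y \<le> E + X"
    and K: "K > 0" and h: "h > 0" "h \<le> 1" "K*h \<le> 1" and \<kappa>: "\<kappa> \<ge> 0" and s: "s \<ge> 1"
    and hC: "h * (32*(64*\<kappa>^2/K + 3*\<kappa>) + 1) \<le> K"
  shows "p^2 + 8*p*(h^2*(\<kappa>/s)*(1+Y^2)) + 3*(h^4*(\<kappa>/s^2)*(1+Y^4))
     \<le> (1 - K*h/4)*E^4 + h*(h^2/s^2)*((64*\<kappa>^2/K + 3*\<kappa>)*(1 + 8*X^4))"
proof -
  define C1 where "C1 = 64*\<kappa>^2/K + 3*\<kappa>"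
  have C1: "C1 \<ge> 0" using K \<kappa> by (simp add: C1_def)
  have Kh: "K*h > 0" using K h by simp
  have p2: "p^2 \<le> (1-K*h)*E^4"
  proof -
    have "p^2 \<le> ((1 - K*h)*E^2)^2" using p by (simp add: power_mono)
    also have "\<dots> = (1-K*h)^2*E^4" by (simp add: power2_eq_square power4_eq_xxxx)
    also have "\<dots> \<le> (1-K*h)*E^4" using h K mult_left_le_one_le[of "1-K*h" "1-K*h"]
      by (intro mult_right_mono) (auto simp: power2_eq_square)
    finally show ?thesis .
  qed
  have "p^2 + 8*p*(h^2*(\<kappa>/s)*(1+Y^2)) + 3*(h^4*(\<kappa>/s^2)*(1+Y^4)) \<le> (1 + K*h/2)*p^2 + (h^3/s^2)*C1*(1+Y^4)"
    using error_noise_terms_le[OF p(1) K h(1,2) \<kappa> s, of Y] by (simp add: C1_def algebra_simps)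
  also have "\<dots> \<le> (1 + K*h/2)*((1-K*h)*E^4) + (h^3/s^2)*C1*(1 + 8*E^4 + 8*X^4)"
  proof -
    have "(1 + K*h/2)*p^2 \<le> (1 + K*h/2)*((1-K*h)*E^4)" using p2 Kh by (intro mult_left_mono) auto
    moreover have "(h^3/s^2)*C1*(1+Y^4) \<le> (h^3/s^2)*C1*(1 + 8*E^4 + 8*X^4)"
      using power4_le_of_le_add[OF Y] C1 h by (intro mult_left_mono) auto
    ultimately show ?thesis by simp
  qed
  also have "\<dots> \<le> (1 - K*h/2)*E^4 + (h^3/s^2)*C1*(8*E^4) + (h^3/s^2)*C1*(1 + 8*X^4)"
  proof -
    have "(1 + K*h/2)*(1-K*h) \<le> 1 - K*h/2" using mult_pos_pos[OF Kh Kh] by (simp add: algebra_simps)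
    hence "(1 + K*h/2)*(1-K*h)*E^4 \<le> (1 - K*h/2)*E^4" by (intro mult_right_mono) auto
    thus ?thesis by (simp add: algebra_simps)
  qed
  also have "\<dots> \<le> (1 - K*h/4)*E^4 + h*(h^2/s^2)*(C1*(1 + 8*X^4))"
  proof -
    have "h^3/s^2 \<le> h^3" using s h by (simp add: divide_le_eq)
    also have "h^3 \<le> h*h" using h by (simp add: power3_eq_cube mult_left_le_one_le)
    finally have "(h^3/s^2)*(C1*8) \<le> (h*h)*(C1*8)" using C1 by (intro mult_right_mono) auto
    also have "\<dots> \<le> K*h/4"
    proof -
      have "h*(32*C1) \<le> K" using hC h by (simp add: C1_def algebra_simps)
      hence "h*(h*(32*C1)) \<le> h*K" using h by (intro mult_left_mono) auto
      thus ?thesis by (simp add: algebra_simps)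
    qed
    finally have "(h^3/s^2)*C1*8*E^4 \<le> K*h/4*E^4" by (intro mult_right_mono) (auto simp: algebra_simps)
    thus ?thesis by (simp add: algebra_simps power3_eq_cube power2_eq_square)
  qed
  finally show ?thesis by (simp add: C1_def)
qed

section \<open>Gaussian moments\<close>

lemma std_gaussian_density_measurable [measurable]: "std_gaussian_density \<in> borel_measurable borel"
  unfolding std_gaussian_density_def by measurable

lemma std_gaussian_density_uminus [simp]: "std_gaussian_density (- x) = std_gaussian_density x"
  unfolding std_gaussian_density_def by simp

lemma std_gaussian_density_normalized:
  fixes Z :: "'w \<Rightarrow> 'a::euclidean_space"
  assumes "prob_space M" and "distributed M lborel Z std_gaussian_density"
  shows "(\<integral>\<^sup>+x. std_gaussian_density (x::'a) \<partial>lborel) = 1"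
proof -
  have law: "distr M lborel Z = density lborel std_gaussian_density" and "Z \<in> borel_measurable M"
    using assms(2) by (auto simp: distributed_def)
  hence "prob_space (distr M lborel Z)"
    using assms(1) by (intro prob_space.prob_space_distr) auto
  hence "prob_space (density lborel (std_gaussian_density :: 'a \<Rightarrow> ennreal))"
    by (simp only: law)
  hence "emeasure (density lborel std_gaussian_density) (UNIV :: 'a set) = 1"
    using prob_space.emeasure_space_1 by fastforce
  thus ?thesis by (simp add: emeasure_density)
qed

lemma nn_integral_lborel_reflect:
  fixes f :: "'a::euclidean_space \<Rightarrow> ennreal"
  assumes f: "f \<in> borel_measurable borel"
  shows "(\<integral>\<^sup>+x. f x \<partial>lborel) = (\<integral>\<^sup>+x. f (- x) \<partial>lborel)"
proof -
  have "lborel = density (distr lborel borel (\<lambda>x::'a. - x)) (\<lambda>_. 1)"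
    using lborel_affine[of "-1::real" "0::'a"] by simp
  hence "(\<integral>\<^sup>+x. f x \<partial>lborel) = (\<integral>\<^sup>+x. f x \<partial>distr lborel borel (\<lambda>x::'a. - x))"
    by (simp add: density_1)
  also have "\<dots> = (\<integral>\<^sup>+x. f (- x) \<partial>lborel)"
    using f by (subst nn_integral_distr) auto
  finally show ?thesis .
qed

lemma square_mult_exp_le:
  fixes t :: real
  assumes "t \<ge> 0"
  shows "t^2 * exp (-t/2) \<le> 64 * exp (-t/4)"
proof -
  have "t/8 \<le> exp (t/8)" using exp_ge_add_one_self[of "t/8"] by linarith
  hence "(t/8)^2 \<le> exp (t/8)^2" using assms by (intro power_mono) auto
  also have "\<dots> = exp (t/4)" by (simp add: power2_eq_square flip: exp_add)
  finally have "t^2 \<le> 64 * exp (t/4)" by (simp add: power2_eq_square)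
  hence "t^2 * exp (-t/2) \<le> 64 * exp (t/4) * exp (-t/2)" by (intro mult_right_mono) auto
  also have "\<dots> = 64 * exp (-t/4)" by (simp flip: exp_add mult.assoc)
  finally show ?thesis .
qed

text \<open>Dominate the fourth-moment integrand by a Gaussian of doubled variance and rescale.\<close>
lemma std_gaussian_fourth_moment_finite:
  assumes one: "(\<integral>\<^sup>+x. std_gaussian_density (x::'a::euclidean_space) \<partial>lborel) = 1"
  shows "(\<integral>\<^sup>+x. std_gaussian_density (x::'a) * ennreal (norm x ^ 4) \<partial>lborel) < \<infinity>"
proof -
  define c :: real where "c = (2 * pi) powr (- real DIM('a) / 2)"
  have c: "c > 0" by (simp add: c_def)
  define G where "G = (\<lambda>y::'a. ennreal (64 * c * exp (- ((norm y)^2) / 4)))"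
  have dominated: "std_gaussian_density x * ennreal (norm x ^ 4) \<le> G x" for x :: 'a
  proof -
    have "c * exp (- (norm x)\<^sup>2 / 2) * norm x ^ 4 = c * ((norm x ^2)^2 * exp (-(norm x ^2)/2))"
      by (simp add: algebra_simps)
    also have "\<dots> \<le> c * (64 * exp (-(norm x^2)/4))"
      using c square_mult_exp_le[of "norm x ^2"] by (intro mult_left_mono) auto
    finally show ?thesis unfolding std_gaussian_density_def G_def c_def[symmetric]
      using c by (simp add: ennreal_mult'[symmetric] mult.assoc)
  qed
  have Gm: "G \<in> borel_measurable borel" unfolding G_def by measurable
  have "lborel = density (distr lborel borel (\<lambda>x::'a. 0 + sqrt 2 *\<^sub>R x)) (\<lambda>_. \<bar>sqrt 2\<bar> ^ DIM('a))"
    by (rule lborel_affine) simp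
  hence "(\<integral>\<^sup>+x. G x \<partial>lborel)
      = (\<integral>\<^sup>+x. G x \<partial>density (distr lborel borel (\<lambda>x::'a. 0 + sqrt 2 *\<^sub>R x)) (\<lambda>_. \<bar>sqrt 2\<bar> ^ DIM('a)))"
    by (rule arg_cong)
  also have "\<dots> = (\<integral>\<^sup>+x. ennreal (sqrt 2 ^ DIM('a)) * G x \<partial>(distr lborel borel (\<lambda>x::'a. sqrt 2 *\<^sub>R x)))"
    using Gm by (subst nn_integral_density) (auto simp: ennreal_power)
  also have "\<dots> = (\<integral>\<^sup>+x. ennreal (sqrt 2 ^ DIM('a)) * G (sqrt 2 *\<^sub>R x) \<partial>lborel)"
    using Gm by (subst nn_integral_distr) auto
  also have "\<dots> = (\<integral>\<^sup>+x. ennreal (64 * sqrt 2 ^ DIM('a)) * std_gaussian_density (x::'a) \<partial>lborel)"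
  proof (intro nn_integral_cong)
    fix x :: 'a
    have "(norm (sqrt 2 *\<^sub>R x))^2 / 4 = (norm x)^2 / 2" by (simp add: power_mult_distrib)
    thus "ennreal (sqrt 2 ^ DIM('a)) * G (sqrt 2 *\<^sub>R x) = ennreal (64 * sqrt 2 ^ DIM('a)) * std_gaussian_density x"
      unfolding G_def std_gaussian_density_def c_def
      by (simp add: ennreal_mult'[symmetric] mult_ac del: norm_scaleR)
  qed
  also have "\<dots> = ennreal (64 * sqrt 2 ^ DIM('a))"
    by (subst nn_integral_cmult) (auto simp: one)
  finally have "(\<integral>\<^sup>+x. G x \<partial>lborel) < \<infinity>" by simp
  moreover have "(\<integral>\<^sup>+x. std_gaussian_density (x::'a) * ennreal (norm x ^ 4) \<partial>lborel) \<le> (\<integral>\<^sup>+x. G x \<partial>lborel)"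
    by (rule nn_integral_mono) (rule dominated)
  ultimately show ?thesis by (meson le_less_trans)
qed

text \<open>Averaging over z and -z removes the odd terms of the expansion, since the density is even.\<close>
lemma std_gaussian_shifted_fourth_moment_le:
  fixes m :: "'a::euclidean_space" and c M4 :: real
  assumes one: "(\<integral>\<^sup>+x. std_gaussian_density (x::'a) \<partial>lborel) = 1"
    and m4: "(\<integral>\<^sup>+x. std_gaussian_density (x::'a) * ennreal (norm x ^ 4) \<partial>lborel) = ennreal M4"
    and M4: "M4 \<ge> 0"
  shows "(\<integral>\<^sup>+z. std_gaussian_density z * ennreal (norm (m + c *\<^sub>R z) ^ 4) \<partial>lborel)
      \<le> ennreal (norm m^4 + 6*c^2*norm m^2*(1+M4) + c^4*M4)"
proof -
  define g where "g = (std_gaussian_density :: 'a \<Rightarrow> ennreal)"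
  define P where "P = norm m^4 + 6*norm m^2*c^2"
  define Q where "Q = 6*norm m^2*c^2 + c^4"
  have PQ: "P \<ge> 0" "Q \<ge> 0" by (auto simp: P_def Q_def)
  define I where "I = (\<integral>\<^sup>+z. g z * ennreal (norm (m + c *\<^sub>R z) ^ 4) \<partial>lborel)"
  have I_reflect: "I = (\<integral>\<^sup>+z. g z * ennreal (norm (m - c *\<^sub>R z) ^ 4) \<partial>lborel)"
    unfolding I_def g_def by (subst nn_integral_lborel_reflect) auto
  have pointwise: "norm (m + c *\<^sub>R z) ^ 4 + norm (m - c *\<^sub>R z) ^ 4 \<le> 2 * (P + Q * norm z ^ 4)" for z
  proof -
    have "2*norm z^2 \<le> 1 + norm z^4"
      using two_mult_le_weighted_squares[of 1 1 "norm z^2"] by (simp add: power2_eq_square power4_eq_xxxx)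
    hence "norm z^2 \<le> 1 + norm z^4" by (smt (verit) zero_le_power2)
    hence "6 * norm m^2 * c^2 * norm z^2 \<le> 6 * norm m^2 * c^2 * (1 + norm z^4)"
      by (intro mult_left_mono) auto
    moreover have "norm (m + c *\<^sub>R z) ^ 4 + norm (m - c *\<^sub>R z) ^ 4
        \<le> 2 * (norm m^4 + 6 * norm m^2 * c^2 * norm z^2 + c^4 * norm z^4)"
      using norm_add_power4_plus_norm_diff_power4[of m "c *\<^sub>R z"] by (simp add: power_mult_distrib)
    ultimately show ?thesis by (simp add: P_def Q_def algebra_simps)
  qed
  have "I + I = (\<integral>\<^sup>+z. g z * ennreal (norm (m + c *\<^sub>R z) ^ 4 + norm (m - c *\<^sub>R z) ^ 4) \<partial>lborel)"
    by (subst (2) I_reflect) (simp add: I_def g_def distrib_left ennreal_plus nn_integral_add)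
  also have "\<dots> \<le> (\<integral>\<^sup>+z. ennreal (2*P) * g z + ennreal (2*Q) * (g z * ennreal (norm z ^ 4)) \<partial>lborel)"
  proof (rule nn_integral_mono)
    fix z :: 'a
    have "g z * ennreal (norm (m + c *\<^sub>R z) ^ 4 + norm (m - c *\<^sub>R z) ^ 4) \<le> g z * ennreal (2 * P + 2 * Q * norm z ^ 4)"
      using pointwise[of z] by (intro mult_left_mono ennreal_leI) (auto simp: algebra_simps)
    also have "\<dots> = ennreal (2*P) * g z + ennreal (2*Q) * (g z * ennreal (norm z ^ 4))"
      using PQ by (simp add: ennreal_plus ennreal_mult algebra_simps)
    finally show "g z * ennreal (norm (m + c *\<^sub>R z) ^ 4 + norm (m - c *\<^sub>R z) ^ 4)
        \<le> ennreal (2*P) * g z + ennreal (2*Q) * (g z * ennreal (norm z ^ 4))" .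
  qed
  also have "\<dots> = ennreal (2*P) + ennreal (2*Q) * ennreal M4"
    using one m4 by (subst nn_integral_add) (auto simp: nn_integral_cmult g_def)
  also have "\<dots> = ennreal (2*P + (2*Q) * M4)"
    using PQ M4 by (simp add: ennreal_plus ennreal_mult)
  also have "\<dots> = ennreal 2 * ennreal (P + Q*M4)"
    by (subst ennreal_mult[symmetric]) (use PQ M4 in \<open>auto simp: algebra_simps\<close>)
  finally have "2 * I \<le> 2 * ennreal (P + Q*M4)" by (simp add: mult_2)
  hence "I \<le> ennreal (P + Q*M4)" by (subst (asm) ennreal_mult_le_mult_iff) auto
  also have "P + Q*M4 = norm m^4 + 6*c^2*norm m^2*(1+M4) + c^4*M4" by (simp add: P_def Q_def algebra_simps)
  finally show ?thesis unfolding I_def g_def .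
qed

text \<open>The expansion of the fourth power is integrated termwise; the term linear in the noise vanishes.\<close>
lemma nn_integral_norm_add_centered_power4_le:
  fixes \<xi> :: "'u \<Rightarrow> 'a::euclidean_space" and D :: 'a
  assumes N: "prob_space N"
    and \<xi>_measurable: "\<xi> \<in> borel_measurable N" and \<xi>_integrable: "integrable N \<xi>"
    and centered: "(\<integral>u. \<xi> u \<partial>N) = 0"
    and W2: "(\<integral>\<^sup>+u. ennreal (norm (\<xi> u)^2) \<partial>N) \<le> ennreal W2"
    and W4: "(\<integral>\<^sup>+u. ennreal (norm (\<xi> u)^4) \<partial>N) \<le> ennreal W4"
    and W: "W2 \<ge> 0" "W4 \<ge> 0"
  shows "(\<integral>\<^sup>+u. ennreal (norm (D + \<xi> u)^4) \<partial>N) \<le> ennreal ((norm D^2)^2 + 8*norm D^2*W2 + 3*W4)"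
proof -
  interpret prob_space N by (rule N)
  define p where "p = norm D^2"
  have p: "p \<ge> 0" by (simp add: p_def)
  define F where "F u = p^2 + 4*p*inner D (\<xi> u) + 8*p*norm (\<xi> u)^2 + 3*(norm (\<xi> u)^2)^2" for u
  have dominated: "norm (D + \<xi> u)^4 \<le> F u" for u unfolding F_def p_def by (rule norm_add_power4_le)
  have F_nonneg: "0 \<le> F u" for u using dominated[of u] norm_ge_zero[of "D + \<xi> u"] by (meson order_trans zero_le_power)
  have [measurable]: "\<xi> \<in> borel_measurable N" by (rule \<xi>_measurable)
  have i2: "integrable N (\<lambda>u. norm (\<xi> u)^2)"
    by (rule integrableI_bounded) (use W2 in \<open>auto simp: le_less_trans\<close>)
  have i4: "integrable N (\<lambda>u. (norm (\<xi> u)^2)^2)"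
    by (rule integrableI_bounded) (use W4 in \<open>auto simp: le_less_trans\<close>)
  have I2: "(\<integral>u. norm (\<xi> u)^2 \<partial>N) \<le> W2"
    using W2 W i2 by (subst (asm) nn_integral_eq_integral) (auto simp: ennreal_le_iff)
  have I4: "(\<integral>u. (norm (\<xi> u)^2)^2 \<partial>N) \<le> W4"
    using W4 W i4 by (subst (asm) nn_integral_eq_integral) (auto simp: ennreal_le_iff)
  have IF: "(\<integral>u. F u \<partial>N) = p^2 + 8*p*(\<integral>u. norm (\<xi> u)^2 \<partial>N) + 3*(\<integral>u. (norm (\<xi> u)^2)^2 \<partial>N)"
    unfolding F_def using i2 i4 \<xi>_integrable centered by (simp add: prob_space)
  have "(\<integral>\<^sup>+u. ennreal (norm (D + \<xi> u)^4) \<partial>N) \<le> (\<integral>\<^sup>+u. ennreal (F u) \<partial>N)"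
    by (intro nn_integral_mono ennreal_leI dominated)
  also have "\<dots> = ennreal (\<integral>u. F u \<partial>N)"
    unfolding F_def using i2 i4 \<xi>_integrable F_nonneg by (intro nn_integral_eq_integral) (auto simp: F_def)
  also have "\<dots> \<le> ennreal ((norm D^2)^2 + 8*norm D^2*W2 + 3*W4)"
  proof (rule ennreal_leI)
    have "8*p*(\<integral>u. norm (\<xi> u)^2 \<partial>N) \<le> 8*p*W2" using I2 p by (intro mult_left_mono) auto
    thus "(\<integral>u. F u \<partial>N) \<le> (norm D^2)^2 + 8*norm D^2*W2 + 3*W4" unfolding IF using I4 by (simp add: p_def)
  qed
  finally show ?thesis .
qed

section \<open>Independence and measurability of the chains\<close>

lemma (in prob_space) nn_integral_indep_var:
  assumes ind: "indep_var S X T Y" and f: "f \<in> borel_measurable (S \<Otimes>\<^sub>M T)"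
  shows "(\<integral>\<^sup>+w. f (X w, Y w) \<partial>M) = (\<integral>\<^sup>+x. \<integral>\<^sup>+y. f (x, y) \<partial>distr M T Y \<partial>distr M S X)"
proof -
  have rv: "X \<in> measurable M S" "Y \<in> measurable M T"
    and eq: "distr M S X \<Otimes>\<^sub>M distr M T Y = distr M (S \<Otimes>\<^sub>M T) (\<lambda>x. (X x, Y x))"
    using ind unfolding indep_var_distribution_eq by auto
  interpret T: prob_space "distr M T Y" by (rule prob_space_distr[OF rv(2)])
  have "(\<integral>\<^sup>+w. f (X w, Y w) \<partial>M) = (\<integral>\<^sup>+z. f z \<partial>distr M (S \<Otimes>\<^sub>M T) (\<lambda>x. (X x, Y x)))"
    using rv f by (subst nn_integral_distr) auto
  also have "\<dots> = (\<integral>\<^sup>+x. \<integral>\<^sup>+y. f (x, y) \<partial>distr M T Y \<partial>distr M S X)"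
    unfolding eq[symmetric] by (rule T.nn_integral_fst[symmetric]) (use f in simp)
  finally show ?thesis .
qed

lemma (in prob_space) indep_var_of_indep_sets:
  assumes indep: "indep_sets E I"
    and stab: "\<And>i. i \<in> I \<Longrightarrow> Int_stable (E i)"
    and AI: "A \<subseteq> I" and i: "i \<in> I" "i \<notin> A"
    and Epow: "(\<Union>j\<in>A. E j) \<subseteq> Pow (space M)"
    and X: "X \<in> measurable (sigma (space M) (\<Union>j\<in>A. E j)) S" and Xm: "X \<in> measurable M S"
    and Y: "Y \<in> measurable M T" and Ysets: "\<And>B. B \<in> sets T \<Longrightarrow> Y -` B \<inter> space M \<in> E i"
  shows "indep_var S X T Y"
proof -
  let ?I = "case_bool A {i}"
  have collected: "indep_sets (\<lambda>j. sigma_sets (space M) (\<Union>k\<in>?I j. E k)) UNIV"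
  proof (rule indep_sets_collect_sigma)
    show "indep_sets E (\<Union>j\<in>UNIV. ?I j)"
      by (rule indep_sets_mono_index[OF _ indep]) (use AI i in \<open>auto split: bool.splits\<close>)
    show "Int_stable (E k)" if "j \<in> UNIV" "k \<in> ?I j" for k j
      using that AI i by (intro stab) (auto split: bool.splits)
    show "disjoint_family_on ?I UNIV"
      using i by (auto simp: disjoint_family_on_def split: bool.splits)
  qed
  have X_sets: "sigma_sets (space M) {X -` B \<inter> space M |B. B \<in> sets S} \<subseteq> sigma_sets (space M) (\<Union>k\<in>A. E k)"
  proof (rule sigma_sets_mono, safe)
    fix B assume "B \<in> sets S"
    hence "X -` B \<inter> space (sigma (space M) (\<Union>j\<in>A. E j)) \<in> sets (sigma (space M) (\<Union>j\<in>A. E j))"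
      using X by (rule measurable_sets[rotated])
    thus "X -` B \<inter> space M \<in> sigma_sets (space M) (\<Union>k\<in>A. E k)" using Epow by simp
  qed
  have Y_sets: "sigma_sets (space M) {Y -` B \<inter> space M |B. B \<in> sets T} \<subseteq> sigma_sets (space M) (\<Union>k\<in>{i}. E k)"
    by (rule sigma_sets_mono') (use Ysets in auto)
  show ?thesis
    unfolding indep_var_eq indep_set_def
    by (intro conjI Xm Y indep_sets_mono_sets[OF collected]) (use X_sets Y_sets in \<open>auto split: bool.splits\<close>)
qed

text \<open>Independence of two random variables is only available for a common codomain, so both are
  embedded into the product space.\<close>
lemma (in prob_space) indep_var_pair_embedding:
  fixes X :: "'a \<Rightarrow> 'b::second_countable_topology" and Y :: "'a \<Rightarrow> 'c::second_countable_topology"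
  assumes indep: "indep_sets E I"
    and stab: "\<And>i. i \<in> I \<Longrightarrow> Int_stable (E i)"
    and AI: "A \<subseteq> I" and i: "i \<in> I" "i \<notin> A"
    and Epow: "(\<Union>j\<in>A. E j) \<subseteq> Pow (space M)"
    and X: "X \<in> borel_measurable (sigma (space M) (\<Union>j\<in>A. E j))" and Xm[measurable]: "X \<in> borel_measurable M"
    and Ym[measurable]: "Y \<in> borel_measurable M" and Ysets: "\<And>B. B \<in> sets borel \<Longrightarrow> Y -` B \<inter> space M \<in> E i"
  shows "indep_var borel (\<lambda>w. (X w, undefined::'c)) borel (\<lambda>w. (undefined::'b, Y w))"
proof -
  have [measurable]: "X \<in> borel_measurable (sigma (space M) (\<Union>j\<in>A. E j))" by (rule X)
  have "(\<lambda>w. (X w, undefined::'c)) \<in> measurable (sigma (space M) (\<Union>j\<in>A. E j)) (borel \<Otimes>\<^sub>M borel)"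
    by measurable
  hence X': "(\<lambda>w. (X w, undefined::'c)) \<in> borel_measurable (sigma (space M) (\<Union>j\<in>A. E j))"
    by (simp add: borel_prod)
  have "(\<lambda>w. (X w, undefined::'c)) \<in> measurable M (borel \<Otimes>\<^sub>M borel)" by measurable
  hence X'M: "(\<lambda>w. (X w, undefined::'c)) \<in> borel_measurable M" by (simp add: borel_prod)
  have "(\<lambda>w. (undefined::'b, Y w)) \<in> measurable M (borel \<Otimes>\<^sub>M borel)" by measurable
  hence Y'M: "(\<lambda>w. (undefined::'b, Y w)) \<in> borel_measurable M" by (simp add: borel_prod)
  have "(\<lambda>y::'c. (undefined::'b, y)) \<in> measurable borel (borel \<Otimes>\<^sub>M borel)" by measurable
  hence pair: "(\<lambda>y::'c. (undefined::'b, y)) \<in> borel_measurable borel" by (simp add: borel_prod)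
  show ?thesis
  proof (rule indep_var_of_indep_sets[OF indep stab AI i Epow X' X'M Y'M])
    fix B :: "('b \<times> 'c) set" assume "B \<in> sets borel"
    hence "(\<lambda>y::'c. (undefined::'b, y)) -` B \<inter> space borel \<in> sets borel" by (rule measurable_sets[OF pair])
    hence "Y -` ((\<lambda>y::'c. (undefined::'b, y)) -` B) \<inter> space M \<in> E i" by (intro Ysets) simp
    moreover have "(\<lambda>w. (undefined::'b, Y w)) -` B \<inter> space M = Y -` ((\<lambda>y. (undefined, y)) -` B) \<inter> space M"
      by auto
    ultimately show "(\<lambda>w. (undefined::'b, Y w)) -` B \<inter> space M \<in> E i" by simp
  qed
qed

lemma (in prob_space) nn_integral_indep_sets_pair:
  fixes X :: "'a \<Rightarrow> 'b::second_countable_topology" and Y :: "'a \<Rightarrow> 'c::second_countable_topology"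
  assumes indep: "indep_sets E I"
    and stab: "\<And>i. i \<in> I \<Longrightarrow> Int_stable (E i)"
    and AI: "A \<subseteq> I" and i: "i \<in> I" "i \<notin> A"
    and Epow: "(\<Union>j\<in>A. E j) \<subseteq> Pow (space M)"
    and X: "X \<in> borel_measurable (sigma (space M) (\<Union>j\<in>A. E j))" and Xm[measurable]: "X \<in> borel_measurable M"
    and Ym[measurable]: "Y \<in> borel_measurable M" and Ysets: "\<And>B. B \<in> sets borel \<Longrightarrow> Y -` B \<inter> space M \<in> E i"
    and f[measurable]: "f \<in> borel_measurable (borel \<Otimes>\<^sub>M borel)"
  shows "(\<integral>\<^sup>+w. f (X w, Y w) \<partial>M) = (\<integral>\<^sup>+x. \<integral>\<^sup>+y. f (x, y) \<partial>distr M borel Y \<partial>distr M borel X)"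
proof -
  define X' where "X' = (\<lambda>w. (X w, undefined::'c))"
  define Y' where "Y' = (\<lambda>w. (undefined::'b, Y w))"
  have "X' \<in> measurable M (borel \<Otimes>\<^sub>M borel)" unfolding X'_def by measurable
  hence X'm: "X' \<in> borel_measurable M" by (simp add: borel_prod)
  have "Y' \<in> measurable M (borel \<Otimes>\<^sub>M borel)" unfolding Y'_def by measurable
  hence Y'm: "Y' \<in> borel_measurable M" by (simp add: borel_prod)
  define F where "F = (\<lambda>(p::'b \<times> 'c, q::'b \<times> 'c). f (fst p, snd q))"
  have [measurable]: "(\<lambda>p::'b\<times>'c. fst p) \<in> borel_measurable borel" "(\<lambda>p::'b\<times>'c. snd p) \<in> borel_measurable borel"
    by (intro borel_measurable_continuous_onI continuous_intros)+
  have F: "F \<in> borel_measurable (borel \<Otimes>\<^sub>M borel)" unfolding F_def by measurable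
  interpret DY: prob_space "distr M borel Y" by (rule prob_space_distr) simp
  have H: "(\<lambda>x. \<integral>\<^sup>+y. f (x, y) \<partial>distr M borel Y) \<in> borel_measurable borel" by measurable
  have "(\<integral>\<^sup>+w. f (X w, Y w) \<partial>M) = (\<integral>\<^sup>+w. F (X' w, Y' w) \<partial>M)" by (simp add: F_def X'_def Y'_def)
  also have "\<dots> = (\<integral>\<^sup>+p. \<integral>\<^sup>+q. F (p, q) \<partial>distr M borel Y' \<partial>distr M borel X')"
    unfolding X'_def Y'_def
    by (rule nn_integral_indep_var[OF indep_var_pair_embedding[OF assms(1-10)] F])
  also have "\<dots> = (\<integral>\<^sup>+p. \<integral>\<^sup>+y. f (fst p, y) \<partial>distr M borel Y \<partial>distr M borel X')"
  proof (rule nn_integral_cong)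
    fix p :: "'b \<times> 'c"
    have "(\<integral>\<^sup>+q. F (p, q) \<partial>distr M borel Y') = (\<integral>\<^sup>+w. f (fst p, Y w) \<partial>M)"
      using Y'm by (subst nn_integral_distr) (auto simp: F_def Y'_def)
    also have "\<dots> = (\<integral>\<^sup>+y. f (fst p, y) \<partial>distr M borel Y)"
      by (subst nn_integral_distr) auto
    finally show "(\<integral>\<^sup>+q. F (p, q) \<partial>distr M borel Y') = (\<integral>\<^sup>+y. f (fst p, y) \<partial>distr M borel Y)" .
  qed
  also have "\<dots> = (\<integral>\<^sup>+w. \<integral>\<^sup>+y. f (X w, y) \<partial>distr M borel Y \<partial>M)"
    using X'm H by (subst nn_integral_distr) (auto simp: X'_def)
  also have "\<dots> = (\<integral>\<^sup>+x. \<integral>\<^sup>+y. f (x, y) \<partial>distr M borel Y \<partial>distr M borel X)"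
    using H by (subst nn_integral_distr) auto
  finally show ?thesis .
qed

lemma borel_measurable_sigma_UN:
  fixes V :: "'x \<Rightarrow> 'b::topological_space"
  assumes "i \<in> A" and "(\<Union>j\<in>A. E j) \<subseteq> Pow \<Omega>"
    and "\<And>B. B \<in> sets borel \<Longrightarrow> V -` B \<inter> \<Omega> \<in> E i"
  shows "V \<in> borel_measurable (sigma \<Omega> (\<Union>j\<in>A. E j))"
proof (rule measurableI)
  fix B :: "'b set" assume "B \<in> sets borel"
  hence "V -` B \<inter> \<Omega> \<in> (\<Union>j\<in>A. E j)" using assms by auto
  thus "V -` B \<inter> space (sigma \<Omega> (\<Union>j\<in>A. E j)) \<in> sets (sigma \<Omega> (\<Union>j\<in>A. E j))"
    using assms(2) by auto
qed auto

lemma borel_measurable_uncurry_compose: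
  fixes b :: "'a::second_countable_topology \<Rightarrow> 'u::second_countable_topology \<Rightarrow> 'c::topological_space"
  assumes "(\<lambda>(x, u). b x u) \<in> borel_measurable borel"
    and "f \<in> borel_measurable N" and "g \<in> borel_measurable N"
  shows "(\<lambda>w. b (f w) (g w)) \<in> borel_measurable N"
proof -
  have "(\<lambda>(x, u). b x u) \<circ> (\<lambda>w. (f w, g w)) \<in> borel_measurable N"
    using assms by (intro measurable_comp[OF measurable_Pair]) (auto simp: borel_prod)
  thus ?thesis by (simp add: comp_def)
qed

lemma input_sigmas_subset_Pow: "(\<Union>j\<in>A. input_sigmas M X0 Z U j) \<subseteq> Pow (space M)"
  unfolding input_sigmas_def
  by (auto split: rv_idx.splits) (metis in_mono sets.sets_into_space space_vimage_algebra)+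

lemma vimage_in_input_sigmas:
  "B \<in> sets borel \<Longrightarrow> X0 -` B \<inter> space M \<in> input_sigmas M X0 Z U IX0"
  "B \<in> sets borel \<Longrightarrow> Z k -` B \<inter> space M \<in> input_sigmas M X0 Z U (IZ k)"
  "B' \<in> sets borel \<Longrightarrow> U k -` B' \<inter> space M \<in> input_sigmas M X0 Z U (IU k)"
  unfolding input_sigmas_def by (auto simp: sets_vimage_algebra2)

lemma Int_stable_input_sigmas: "Int_stable (input_sigmas M X0 Z U i)"
  unfolding input_sigmas_def Int_stable_def by (auto split: rv_idx.splits)

definition inputs_upto :: "nat \<Rightarrow> rv_idx set" where
  "inputs_upto k = {IX0} \<union> {IZ j | j. 1 \<le> j \<and> j \<le> k} \<union> {IU j | j. j < k}"

definition inputs_upto_sigma ::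
  "'w measure \<Rightarrow> ('w \<Rightarrow> 'a::topological_space) \<Rightarrow> (nat \<Rightarrow> 'w \<Rightarrow> 'a) \<Rightarrow> (nat \<Rightarrow> 'w \<Rightarrow> 'u::topological_space)
    \<Rightarrow> nat \<Rightarrow> 'w measure" where
  "inputs_upto_sigma M X0 Z U k = sigma (space M) (\<Union>j\<in>inputs_upto k. input_sigmas M X0 Z U j)"

lemma inputs_upto_subset: "inputs_upto k \<subseteq> input_index"
  and next_inputs_not_in_inputs_upto: "IZ (Suc k) \<notin> inputs_upto k" "IU k \<notin> inputs_upto k"
  and next_inputs_in_input_index: "IZ (Suc k) \<in> input_index" "IU k \<in> input_index"
  by (auto simp: inputs_upto_def input_index_def)

lemma chains_measurable_inputs_upto:
  fixes b :: "'a::euclidean_space \<Rightarrow> 'u::euclidean_space \<Rightarrow> 'a"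
  assumes b: "(\<lambda>(x, u). b x u) \<in> borel_measurable borel" and a[measurable]: "a \<in> borel_measurable borel"
  shows "sgd_chain h \<beta> b X0 Z U k \<in> borel_measurable (inputs_upto_sigma M X0 Z U k)
    \<and> exact_chain h \<beta> a X0 Z k \<in> borel_measurable (inputs_upto_sigma M X0 Z U k)"
proof (induction k)
  case 0
  have "X0 \<in> borel_measurable (inputs_upto_sigma M X0 Z U 0)" unfolding inputs_upto_sigma_def
    by (rule borel_measurable_sigma_UN[where i=IX0, OF _ input_sigmas_subset_Pow])
      (auto simp: inputs_upto_def vimage_in_input_sigmas)
  thus ?case by simp
next
  case (Suc k)
  have "subalgebra (inputs_upto_sigma M X0 Z U (Suc k)) (inputs_upto_sigma M X0 Z U k)"
    unfolding subalgebra_def inputs_upto_sigma_def sets_measure_of[OF input_sigmas_subset_Pow]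
      space_measure_of[OF input_sigmas_subset_Pow]
    by (intro conjI sigma_sets_mono' UN_mono) (auto simp: inputs_upto_def)
  with Suc.IH have [measurable]: "sgd_chain h \<beta> b X0 Z U k \<in> borel_measurable (inputs_upto_sigma M X0 Z U (Suc k))"
    "exact_chain h \<beta> a X0 Z k \<in> borel_measurable (inputs_upto_sigma M X0 Z U (Suc k))"
    using measurable_from_subalg by blast+
  have [measurable]: "U k \<in> borel_measurable (inputs_upto_sigma M X0 Z U (Suc k))"
    "Z (Suc k) \<in> borel_measurable (inputs_upto_sigma M X0 Z U (Suc k))"
    unfolding inputs_upto_sigma_def
    by (rule borel_measurable_sigma_UN[where i="IU k", OF _ input_sigmas_subset_Pow]
        borel_measurable_sigma_UN[where i="IZ (Suc k)", OF _ input_sigmas_subset_Pow];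
        auto simp: inputs_upto_def vimage_in_input_sigmas)+
  have [measurable]: "(\<lambda>w. b (sgd_chain h \<beta> b X0 Z U k w) (U k w)) \<in> borel_measurable (inputs_upto_sigma M X0 Z U (Suc k))"
    by (rule borel_measurable_uncurry_compose[OF b]) measurable
  show ?case by simp
qed

lemma chains_borel_measurable:
  fixes b :: "'a::euclidean_space \<Rightarrow> 'u::euclidean_space \<Rightarrow> 'a"
  assumes b: "(\<lambda>(x, u). b x u) \<in> borel_measurable borel" and [measurable]: "a \<in> borel_measurable borel"
    and [measurable]: "X0 \<in> borel_measurable M" and U: "\<And>j. U j \<in> borel_measurable M"
    and Z: "\<And>j. j \<ge> 1 \<Longrightarrow> Z j \<in> borel_measurable M"
  shows "sgd_chain h \<beta> b X0 Z U k \<in> borel_measurable M \<and> exact_chain h \<beta> a X0 Z k \<in> borel_measurable M"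
proof (induction k)
  case (Suc k)
  hence [measurable]: "sgd_chain h \<beta> b X0 Z U k \<in> borel_measurable M" "exact_chain h \<beta> a X0 Z k \<in> borel_measurable M"
    by auto
  have [measurable]: "U k \<in> borel_measurable M" "Z (Suc k) \<in> borel_measurable M" using U Z by auto
  have [measurable]: "(\<lambda>w. b (sgd_chain h \<beta> b X0 Z U k w) (U k w)) \<in> borel_measurable M"
    by (rule borel_measurable_uncurry_compose[OF b]) measurable
  show ?case by simp
qed simp

lemma (in prob_space) nn_integral_affine_combination:
  assumes "f \<in> borel_measurable M" "\<And>w. f w \<ge> 0" "g \<in> borel_measurable M" "\<And>w. g w \<ge> 0"
    and "\<alpha> \<ge> 0" "\<gamma> \<ge> 0" "c \<ge> 0"
  shows "(\<integral>\<^sup>+w. ennreal (\<alpha> * f w + \<gamma> * g w + c) \<partial>M)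
     = ennreal \<alpha> * (\<integral>\<^sup>+w. ennreal (f w) \<partial>M) + ennreal \<gamma> * (\<integral>\<^sup>+w. ennreal (g w) \<partial>M) + ennreal c"
proof -
  have "(\<integral>\<^sup>+w. ennreal (\<alpha> * f w + \<gamma> * g w + c) \<partial>M)
      = (\<integral>\<^sup>+w. ennreal \<alpha> * ennreal (f w) + ennreal \<gamma> * ennreal (g w) + ennreal c \<partial>M)"
    using assms by (intro nn_integral_cong) (simp add: ennreal_plus ennreal_mult)
  also have "\<dots> = ennreal \<alpha> * (\<integral>\<^sup>+w. ennreal (f w) \<partial>M) + ennreal \<gamma> * (\<integral>\<^sup>+w. ennreal (g w) \<partial>M) + ennreal c"
    using assms by (simp add: nn_integral_add nn_integral_cmult emeasure_space_1)
  finally show ?thesis .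
qed

lemma ennreal_le_mult_right_mono:
  assumes "I \<le> ennreal (\<sigma> * c)" "\<sigma> \<le> \<tau>" "0 \<le> c"
  shows "I \<le> ennreal (\<tau> * c)"
  using assms by (meson ennreal_leI mult_right_mono order_trans)

lemma ennreal_affine_recursion_bound:
  fixes I J :: "nat \<Rightarrow> ennreal"
  assumes "I 0 \<le> ennreal B"
    and "\<And>j. I (Suc j) \<le> ennreal \<alpha> * I j + ennreal \<gamma> * J j + ennreal c"
    and "\<And>j. J j \<le> ennreal B'"
    and "0 \<le> \<alpha>" "0 \<le> \<gamma>" "0 \<le> c" "0 \<le> B" "0 \<le> B'" "\<alpha> * B + \<gamma> * B' + c \<le> B"
  shows "I k \<le> ennreal B"
proof (induction k)
  case (Suc k)
  have "I (Suc k) \<le> ennreal \<alpha> * ennreal B + ennreal \<gamma> * ennreal B' + ennreal c"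
    using assms(2)[of k] Suc assms(3)[of k]
    by (meson add_mono mult_left_mono order_refl order_trans zero_le)
  also have "\<dots> = ennreal (\<alpha> * B + \<gamma> * B' + c)" using assms by (simp add: ennreal_plus ennreal_mult)
  also have "\<dots> \<le> ennreal B" using assms by (intro ennreal_leI) auto
  finally show ?case .
qed (rule assms(1))

section \<open>Fourth moments of the coupled chains\<close>

locale fourth_moment_constants =
  fixes a :: "'a::real_normed_vector \<Rightarrow> 'a" and K \<kappa> \<beta> m0 M4 :: real
  assumes K_pos: "K > 0" and \<kappa>_nonneg: "\<kappa> \<ge> 0" and m0_nonneg: "m0 \<ge> 0" and M4_nonneg: "M4 \<ge> 0"
begin

text \<open>The constants of the two moment recursions: |x + h a x|^2 \<le> (1 - K h) |x|^2 + h drift_step_const,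
  E|X_(k+1)|^4 \<le> (1 - K h/2) E|X_k|^4 + h exact_step_const, and noise_const is the coefficient of
  h^3/s^2 in the error recursion.\<close>

definition drift_step_const :: real where
  "drift_step_const = 2 * norm (a 0)^2 / K + 2 * norm (a 0)^2"

definition exact_step_const :: real where
  "exact_step_const = 2 * (drift_step_const^2 + 4 * drift_step_const^2 / K)
     + 36 * (\<beta>^2 * (1 + M4))^2 / K + \<beta>^4 * M4"

definition exact_moment_const :: real where
  "exact_moment_const = m0 + 2 * exact_step_const / K"

definition noise_const :: real where
  "noise_const = 64 * \<kappa>^2 / K + 3 * \<kappa>"

definition error_const :: real where
  "error_const = 4 * noise_const * (1 + 8 * exact_moment_const) / K"

definition max_step :: "real \<Rightarrow> real" where
  "max_step L = min 1 (min (1 / K) (min (K / (4 * L^2 + 1)) (K / (32 * noise_const + 1))))"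

lemma drift_step_const_nonneg: "drift_step_const \<ge> 0"
  and exact_step_const_nonneg: "exact_step_const \<ge> 0"
  and exact_moment_const_nonneg: "exact_moment_const \<ge> 0"
  and noise_const_nonneg: "noise_const \<ge> 0"
  and error_const_nonneg: "error_const \<ge> 0"
  using K_pos \<kappa>_nonneg m0_nonneg M4_nonneg
  by (simp_all add: drift_step_const_def exact_step_const_def exact_moment_const_def
      noise_const_def error_const_def)

lemma max_step_pos: "max_step L > 0"
proof -
  have "0 < 4 * L^2 + 1" "0 < 32 * noise_const + 1"
    using noise_const_nonneg by (auto simp: add_nonneg_pos)
  thus ?thesis using K_pos by (simp add: max_step_def)
qed

lemma less_max_step_bounds:
  assumes "h < max_step L"
  shows "h \<le> 1" "K * h \<le> 1" "h * (4 * L^2 + 1) \<le> K" "h * (32 * (64 * \<kappa>^2 / K + 3 * \<kappa>) + 1) \<le> K"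
proof -
  have "0 < 4 * L^2 + 1" "0 < 32 * noise_const + 1"
    using noise_const_nonneg by (auto simp: add_nonneg_pos)
  thus "h \<le> 1" "K * h \<le> 1" "h * (4 * L^2 + 1) \<le> K" "h * (32 * (64 * \<kappa>^2 / K + 3 * \<kappa>) + 1) \<le> K"
    using assms K_pos by (auto simp: max_step_def field_simps noise_const_def)
qed

end

text \<open>Here \<mu> is the law of the drift variables at level 2s, so (A3) and (A4) enter with \<kappa>/s and
  \<kappa>/s^2; M4 is the fourth moment of the standard Gaussian and m0 a bound for that of X0.\<close>
locale coupled_chains = fourth_moment_constants a K \<kappa> \<beta> m0 M4 + prob_space M
  for a :: "'a::euclidean_space \<Rightarrow> 'a" and K \<kappa> \<beta> m0 M4 :: real and M :: "'w measure" +
  fixes b :: "'a \<Rightarrow> 'u::euclidean_space \<Rightarrow> 'a" and \<mu> :: "'u measure" and L h :: real and s :: nat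
    and X0 :: "'w \<Rightarrow> 'a" and Z :: "nat \<Rightarrow> 'w \<Rightarrow> 'a" and U :: "nat \<Rightarrow> 'w \<Rightarrow> 'u"
  assumes a_measurable [measurable]: "a \<in> borel_measurable borel"
    and b_measurable: "(\<lambda>(x, u). b x u) \<in> borel_measurable borel"
    and lipschitz: "\<And>x y. norm (a x - a y) \<le> L * norm (x - y)" and L_nonneg: "L \<ge> 0"
    and strongly_monotone: "\<And>x y. inner (x - y) (a x - a y) \<le> - K * (norm (x - y))\<^sup>2"
    and unbiased: "\<And>x. integrable \<mu> (b x)" "\<And>x. (\<integral>u. b x u \<partial>\<mu>) = a x"
    and noise_second_moment:
      "\<And>x. (\<integral>\<^sup>+u. ennreal ((norm (b x u - a x))\<^sup>2) \<partial>\<mu>) \<le> ennreal (\<kappa> / real s * (1 + (norm x)\<^sup>2))"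
    and noise_fourth_moment:
      "\<And>x. (\<integral>\<^sup>+u. ennreal (norm (b x u - a x) ^ 4) \<partial>\<mu>) \<le> ennreal (\<kappa> / (real s)\<^sup>2 * (1 + norm x ^ 4))"
    and s_pos: "s \<ge> 1"
    and step_size_small: "0 < h" "h < max_step L"
    and gaussian_fourth_moment:
      "(\<integral>\<^sup>+x. std_gaussian_density (x::'a) * ennreal (norm x ^ 4) \<partial>lborel) = ennreal M4"
    and X0_measurable [measurable]: "X0 \<in> borel_measurable M"
    and initial_moment: "(\<integral>\<^sup>+w. ennreal (norm (X0 w) ^ 4) \<partial>M) \<le> ennreal m0"
    and Z_gaussian: "\<And>j. j \<ge> 1 \<Longrightarrow> distributed M lborel (Z j) std_gaussian_density"
    and U_measurable: "\<And>j. U j \<in> borel_measurable M" and U_law: "\<And>j. distr M borel (U j) = \<mu>"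
    and inputs_indep: "prob_space.indep_sets M (input_sigmas M X0 Z U) input_index"
begin

abbreviation exact :: "nat \<Rightarrow> 'w \<Rightarrow> 'a" where "exact k \<equiv> exact_chain h \<beta> a X0 Z k"

abbreviation sgd :: "nat \<Rightarrow> 'w \<Rightarrow> 'a" where "sgd k \<equiv> sgd_chain h \<beta> b X0 Z U k"

lemma step_size: "0 < h" "h \<le> 1" "K * h \<le> 1" "h * (4 * L^2 + 1) \<le> K"
  "h * (32 * (64 * \<kappa>^2 / K + 3 * \<kappa>) + 1) \<le> K"
  using step_size_small less_max_step_bounds by auto

lemma prob_space_\<mu>: "prob_space \<mu>" and sets_\<mu>: "sets \<mu> = sets borel"
  using prob_space_distr[OF U_measurable[of 0]] U_law[of 0] by auto

lemma Z_measurable: "j \<ge> 1 \<Longrightarrow> Z j \<in> borel_measurable M"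
  using Z_gaussian by (simp add: distributed_def)

lemma chains_measurable [measurable]: "sgd k \<in> borel_measurable M" "exact k \<in> borel_measurable M"
  using chains_borel_measurable[OF b_measurable a_measurable X0_measurable U_measurable Z_measurable]
  by auto

lemma chains_measurable_upto:
  "sgd k \<in> borel_measurable (inputs_upto_sigma M X0 Z U k)"
  "exact k \<in> borel_measurable (inputs_upto_sigma M X0 Z U k)"
  using chains_measurable_inputs_upto[OF b_measurable a_measurable, where M=M and ?X0.0=X0 and Z=Z and U=U
      and h=h and \<beta>=\<beta> and k=k] by auto

lemma nn_integral_next_gaussian:
  fixes P :: "'w \<Rightarrow> 'p::second_countable_topology"
  assumes P: "P \<in> borel_measurable (inputs_upto_sigma M X0 Z U k)" "P \<in> borel_measurable M"
    and f: "f \<in> borel_measurable (borel \<Otimes>\<^sub>M borel)"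
  shows "(\<integral>\<^sup>+w. f (P w, Z (Suc k) w) \<partial>M)
    = (\<integral>\<^sup>+x. \<integral>\<^sup>+z. std_gaussian_density z * f (x, z) \<partial>lborel \<partial>distr M borel P)"
proof -
  have Z: "Z (Suc k) \<in> borel_measurable M" by (rule Z_measurable) simp
  have "(\<integral>\<^sup>+w. f (P w, Z (Suc k) w) \<partial>M)
      = (\<integral>\<^sup>+x. \<integral>\<^sup>+z. f (x, z) \<partial>distr M borel (Z (Suc k)) \<partial>distr M borel P)"
    using P Z unfolding inputs_upto_sigma_def
    by (intro nn_integral_indep_sets_pair[OF inputs_indep Int_stable_input_sigmas inputs_upto_subset
          next_inputs_in_input_index(1) next_inputs_not_in_inputs_upto(1) input_sigmas_subset_Pow _ _ _ _ f])
      (auto intro: vimage_in_input_sigmas)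
  moreover have "distr M borel (Z (Suc k)) = density lborel std_gaussian_density"
  proof -
    have "distr M borel (Z (Suc k)) = distr M lborel (Z (Suc k))" by (rule distr_cong) auto
    thus ?thesis using Z_gaussian[of "Suc k"] by (simp add: distributed_def)
  qed
  ultimately show ?thesis
    using f by (simp add: nn_integral_density)
qed

lemma nn_integral_next_drift:
  fixes P :: "'w \<Rightarrow> 'p::second_countable_topology"
  assumes P: "P \<in> borel_measurable (inputs_upto_sigma M X0 Z U k)" "P \<in> borel_measurable M"
    and f: "f \<in> borel_measurable (borel \<Otimes>\<^sub>M borel)"
  shows "(\<integral>\<^sup>+w. f (P w, U k w) \<partial>M) = (\<integral>\<^sup>+x. \<integral>\<^sup>+u. f (x, u) \<partial>\<mu> \<partial>distr M borel P)"
  using P U_measurable U_law unfolding inputs_upto_sigma_def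
  by (subst nn_integral_indep_sets_pair[OF inputs_indep Int_stable_input_sigmas inputs_upto_subset
        next_inputs_in_input_index(2) next_inputs_not_in_inputs_upto(2) input_sigmas_subset_Pow _ _ _ _ f])
    (auto intro: vimage_in_input_sigmas)

lemma gaussian_normalized: "(\<integral>\<^sup>+x. std_gaussian_density (x::'a) \<partial>lborel) = 1"
  using std_gaussian_density_normalized[OF prob_space_axioms Z_gaussian[of 1]] by simp

lemma gaussian_average_exact_step:
  "(\<integral>\<^sup>+z. std_gaussian_density z * ennreal (norm (x + h *\<^sub>R a x + (\<beta> * sqrt h) *\<^sub>R z) ^ 4) \<partial>lborel)
    \<le> ennreal ((1 - K*h/2) * norm x ^ 4 + h * exact_step_const)"
proof -
  define m where "m = x + h *\<^sub>R a x"
  define q where "q = norm m ^ 2"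
  define t where "t = norm x ^ 2"
  have "sqrt h ^ 4 = h^2"
    using step_size(1) by (metis power_mult real_sqrt_pow2 less_imp_le numeral_Bit0 numeral_One mult_2)
  hence "(\<integral>\<^sup>+z. std_gaussian_density z * ennreal (norm (m + (\<beta> * sqrt h) *\<^sub>R z) ^ 4) \<partial>lborel)
      \<le> ennreal (q^2 + 6*(\<beta>^2*h)*q*(1+M4) + (\<beta>^2*h)^2*M4)"
    using std_gaussian_shifted_fourth_moment_le[OF gaussian_normalized gaussian_fourth_moment M4_nonneg,
        of m "\<beta> * sqrt h"] step_size(1)
    by (simp add: q_def power_mult_distrib algebra_simps flip: power_mult)
  also have "\<dots> \<le> ennreal ((1 - K*h/2) * norm x ^ 4 + h * exact_step_const)"
  proof (rule ennreal_leI)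
    have "q \<le> (1 - K*h)*t + h*drift_step_const"
      using monotone_drift_step_bound[of a x L K h] lipschitz[of x 0] strongly_monotone[of x 0]
        L_nonneg K_pos step_size
      by (simp add: q_def t_def m_def drift_step_const_def)
    hence "q^2 \<le> (1 - 3*K*h/4)*t^2 + h*(drift_step_const^2 + 4*drift_step_const^2/K)"
      using K_pos step_size drift_step_const_nonneg
      by (intro square_of_affine_contraction_le) (auto simp: q_def t_def)
    hence "q^2 + 6*(\<beta>^2*h)*q*(1+M4) + (\<beta>^2*h)^2*M4 \<le> (1 - K*h/2)*t^2 + h*exact_step_const"
      unfolding exact_step_const_def using drift_step_const_nonneg K_pos step_size M4_nonneg
      by (intro exact_moment_recursion) (auto simp: q_def t_def)
    thus "q^2 + 6*(\<beta>^2*h)*q*(1+M4) + (\<beta>^2*h)^2*M4 \<le> (1 - K*h/2) * norm x ^ 4 + h * exact_step_const"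
      by (simp add: t_def flip: power_mult)
  qed
  finally show ?thesis by (simp add: m_def add.assoc)
qed

lemma exact_chain_fourth_moment_step:
  "(\<integral>\<^sup>+w. ennreal (norm (exact (Suc k) w) ^ 4) \<partial>M)
    \<le> ennreal (1 - K*h/2) * (\<integral>\<^sup>+w. ennreal (norm (exact k w) ^ 4) \<partial>M) + ennreal (h * exact_step_const)"
proof -
  define F where "F = (\<lambda>(x, z). ennreal (norm (x + h *\<^sub>R a x + (\<beta> * sqrt h) *\<^sub>R z) ^ 4))"
  have F: "F \<in> borel_measurable (borel \<Otimes>\<^sub>M borel)" unfolding F_def by measurable
  have "(\<integral>\<^sup>+w. ennreal (norm (exact (Suc k) w) ^ 4) \<partial>M) = (\<integral>\<^sup>+w. F (exact k w, Z (Suc k) w) \<partial>M)"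
    by (simp add: F_def)
  also have "\<dots> = (\<integral>\<^sup>+x. \<integral>\<^sup>+z. std_gaussian_density z * F (x, z) \<partial>lborel \<partial>distr M borel (exact k))"
    by (rule nn_integral_next_gaussian[OF chains_measurable_upto(2) chains_measurable(2) F])
  also have "\<dots> \<le> (\<integral>\<^sup>+x. ennreal ((1 - K*h/2) * norm x ^ 4 + 0 * norm x ^ 4 + h * exact_step_const)
      \<partial>distr M borel (exact k))"
    by (intro nn_integral_mono) (simp add: F_def gaussian_average_exact_step)
  also have "\<dots> = (\<integral>\<^sup>+w. ennreal ((1 - K*h/2) * norm (exact k w) ^ 4 + 0 * norm (exact k w) ^ 4
      + h * exact_step_const) \<partial>M)"
    by (subst nn_integral_distr) auto
  also have "\<dots> = ennreal (1 - K*h/2) * (\<integral>\<^sup>+w. ennreal (norm (exact k w) ^ 4) \<partial>M)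
      + ennreal 0 * (\<integral>\<^sup>+w. ennreal (norm (exact k w) ^ 4) \<partial>M) + ennreal (h * exact_step_const)"
    using step_size exact_step_const_nonneg by (intro nn_integral_affine_combination) auto
  finally show ?thesis by simp
qed

lemma exact_chain_fourth_moment:
  "(\<integral>\<^sup>+w. ennreal (norm (exact k w) ^ 4) \<partial>M) \<le> ennreal exact_moment_const"
proof (rule ennreal_affine_recursion_bound[where I="\<lambda>k. \<integral>\<^sup>+w. ennreal (norm (exact k w) ^ 4) \<partial>M"
      and \<gamma>=0 and J="\<lambda>_. 0" and B'=0])
  have "m0 \<le> exact_moment_const"
    using exact_step_const_nonneg K_pos by (simp add: exact_moment_const_def)
  with initial_moment show "(\<integral>\<^sup>+w. ennreal (norm (exact 0 w) ^ 4) \<partial>M) \<le> ennreal exact_moment_const"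
    by (simp add: order_trans[OF _ ennreal_leI])
  show "(1 - K*h/2) * exact_moment_const + 0 * 0 + h * exact_step_const \<le> exact_moment_const"
    using K_pos step_size m0_nonneg by (simp add: exact_moment_const_def field_simps)
qed (use exact_chain_fourth_moment_step step_size exact_step_const_nonneg exact_moment_const_nonneg in auto)

lemma drift_average_error_step:
  "(\<integral>\<^sup>+u. ennreal (norm ((y - x) + h *\<^sub>R (b y u - a x)) ^ 4) \<partial>\<mu>)
    \<le> ennreal ((1 - K*h/4) * norm (y - x) ^ 4 + 8*h*(h^2/(real s)^2)*noise_const * norm x ^ 4
        + h*(h^2/(real s)^2)*noise_const)"
proof -
  interpret N: prob_space \<mu> by (rule prob_space_\<mu>)
  define D where "D = (y - x) + h *\<^sub>R (a y - a x)"
  define \<xi> where "\<xi> = (\<lambda>u. h *\<^sub>R (b y u - a y))"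
  define W2 where "W2 = h^2 * (\<kappa> / real s * (1 + norm y^2))"
  define W4 where "W4 = h^4 * (\<kappa> / (real s)^2 * (1 + norm y^4))"
  have by_measurable [measurable]: "b y \<in> borel_measurable \<mu>"
    using borel_measurable_uncurry_compose[OF b_measurable, of "\<lambda>_. y" borel id] sets_\<mu>
    by (simp cong: measurable_cong_sets)
  have \<xi>_integrable: "integrable \<mu> \<xi>" unfolding \<xi>_def using unbiased(1) by auto
  have \<xi>_centered: "(\<integral>u. \<xi> u \<partial>\<mu>) = 0" unfolding \<xi>_def using unbiased by (simp add: N.prob_space)
  have scale: "(\<integral>\<^sup>+u. ennreal (norm (\<xi> u) ^ n) \<partial>\<mu>) = ennreal (h ^ n) * (\<integral>\<^sup>+u. ennreal (norm (b y u - a y) ^ n) \<partial>\<mu>)"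
    for n
    using step_size(1)
    by (subst nn_integral_cmult[symmetric]) (auto simp: \<xi>_def power_mult_distrib ennreal_mult intro!: nn_integral_cong)
  have W2_bound: "(\<integral>\<^sup>+u. ennreal (norm (\<xi> u)^2) \<partial>\<mu>) \<le> ennreal W2"
    unfolding scale W2_def using \<kappa>_nonneg mult_left_mono[OF noise_second_moment[of y], of "ennreal (h^2)"]
    by (subst ennreal_mult) auto
  have W4_bound: "(\<integral>\<^sup>+u. ennreal (norm (\<xi> u)^4) \<partial>\<mu>) \<le> ennreal W4"
    unfolding scale W4_def using \<kappa>_nonneg mult_left_mono[OF noise_fourth_moment[of y], of "ennreal (h^4)"]
    by (subst ennreal_mult) auto
  have "(\<integral>\<^sup>+u. ennreal (norm ((y - x) + h *\<^sub>R (b y u - a x)) ^ 4) \<partial>\<mu>)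
      = (\<integral>\<^sup>+u. ennreal (norm (D + \<xi> u) ^ 4) \<partial>\<mu>)"
    by (intro nn_integral_cong) (simp add: D_def \<xi>_def algebra_simps scaleR_diff_right)
  also have "\<dots> \<le> ennreal ((norm D^2)^2 + 8*norm D^2*W2 + 3*W4)"
    using \<kappa>_nonneg
    by (intro nn_integral_norm_add_centered_power4_le[OF prob_space_\<mu> _ \<xi>_integrable \<xi>_centered W2_bound W4_bound])
      (auto simp: \<xi>_def W2_def W4_def)
  also have "\<dots> \<le> ennreal ((1 - K*h/4) * norm (y - x) ^ 4 + 8*h*(h^2/(real s)^2)*noise_const * norm x ^ 4
        + h*(h^2/(real s)^2)*noise_const)"
  proof (rule ennreal_leI)
    have "norm D^2 \<le> (1 - K*h) * norm (y - x)^2"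
      unfolding D_def using lipschitz[of y x] strongly_monotone[of y x] L_nonneg step_size
      by (intro monotone_drift_contraction) (auto simp: algebra_simps intro: order_trans[OF _ step_size(4)])
    moreover have "norm y \<le> norm (y - x) + norm x" using norm_triangle_ineq[of "y - x" x] by simp
    ultimately have "(norm D^2)^2 + 8*norm D^2*(h^2*(\<kappa>/real s)*(1+norm y^2))
        + 3*(h^4*(\<kappa>/(real s)^2)*(1+norm y^4))
        \<le> (1 - K*h/4)*norm (y - x)^4 + h*(h^2/(real s)^2)*(noise_const*(1 + 8*norm x^4))"
      unfolding noise_const_def using K_pos step_size \<kappa>_nonneg s_pos
      by (intro error_moment_recursion) auto
    thus "(norm D^2)^2 + 8*norm D^2*W2 + 3*W4 \<le> (1 - K*h/4) * norm (y - x) ^ 4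
        + 8*h*(h^2/(real s)^2)*noise_const * norm x ^ 4 + h*(h^2/(real s)^2)*noise_const"
      by (simp add: W2_def W4_def mult.assoc algebra_simps add_divide_distrib)
  qed
  finally show ?thesis .
qed

lemma error_fourth_moment_step:
  "(\<integral>\<^sup>+w. ennreal (norm (sgd (Suc k) w - exact (Suc k) w) ^ 4) \<partial>M)
    \<le> ennreal (1 - K*h/4) * (\<integral>\<^sup>+w. ennreal (norm (sgd k w - exact k w) ^ 4) \<partial>M)
      + ennreal (8*h*(h^2/(real s)^2)*noise_const) * (\<integral>\<^sup>+w. ennreal (norm (exact k w) ^ 4) \<partial>M)
      + ennreal (h*(h^2/(real s)^2)*noise_const)"
proof -
  define P where "P = (\<lambda>w. (sgd k w, exact k w))"
  have P_measurable: "P \<in> borel_measurable M" "P \<in> borel_measurable (inputs_upto_sigma M X0 Z U k)"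
    unfolding P_def borel_prod[symmetric]
    using chains_measurable chains_measurable_upto by (auto intro: measurable_Pair)
  have [measurable]: "(\<lambda>p::'a \<times> 'a. fst p) \<in> borel_measurable borel" "(\<lambda>p::'a \<times> 'a. snd p) \<in> borel_measurable borel"
    by (intro borel_measurable_continuous_onI continuous_intros)+
  define G where "G = (\<lambda>p::('a \<times> 'a) \<times> 'u.
    ennreal (norm ((fst (fst p) - snd (fst p)) + h *\<^sub>R (b (fst (fst p)) (snd p) - a (snd (fst p)))) ^ 4))"
  have G: "G \<in> borel_measurable (borel \<Otimes>\<^sub>M borel)"
  proof -
    have [measurable]: "(\<lambda>p::('a \<times> 'a) \<times> 'u. b (fst (fst p)) (snd p)) \<in> borel_measurable (borel \<Otimes>\<^sub>M borel)"
      by (rule borel_measurable_uncurry_compose[OF b_measurable]) measurable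
    show ?thesis unfolding G_def by measurable
  qed
  have "(\<integral>\<^sup>+w. ennreal (norm (sgd (Suc k) w - exact (Suc k) w) ^ 4) \<partial>M) = (\<integral>\<^sup>+w. G (P w, U k w) \<partial>M)"
    by (intro nn_integral_cong) (simp add: G_def P_def algebra_simps scaleR_diff_right)
  also have "\<dots> = (\<integral>\<^sup>+p. \<integral>\<^sup>+u. G (p, u) \<partial>\<mu> \<partial>distr M borel P)"
    by (rule nn_integral_next_drift[OF P_measurable(2,1) G])
  also have "\<dots> \<le> (\<integral>\<^sup>+p. ennreal ((1 - K*h/4) * norm (fst p - snd p) ^ 4
      + 8*h*(h^2/(real s)^2)*noise_const * norm (snd p) ^ 4 + h*(h^2/(real s)^2)*noise_const) \<partial>distr M borel P)"
  proof (rule nn_integral_mono)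
    fix p :: "'a \<times> 'a"
    show "(\<integral>\<^sup>+u. G (p, u) \<partial>\<mu>) \<le> ennreal ((1 - K*h/4) * norm (fst p - snd p) ^ 4
      + 8*h*(h^2/(real s)^2)*noise_const * norm (snd p) ^ 4 + h*(h^2/(real s)^2)*noise_const)"
      unfolding G_def fst_conv snd_conv by (rule drift_average_error_step)
  qed
  also have "\<dots> = (\<integral>\<^sup>+w. ennreal ((1 - K*h/4) * norm (sgd k w - exact k w) ^ 4
      + 8*h*(h^2/(real s)^2)*noise_const * norm (exact k w) ^ 4 + h*(h^2/(real s)^2)*noise_const) \<partial>M)"
    using P_measurable by (subst nn_integral_distr) (auto simp: P_def)
  also have "\<dots> = ennreal (1 - K*h/4) * (\<integral>\<^sup>+w. ennreal (norm (sgd k w - exact k w) ^ 4) \<partial>M)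
      + ennreal (8*h*(h^2/(real s)^2)*noise_const) * (\<integral>\<^sup>+w. ennreal (norm (exact k w) ^ 4) \<partial>M)
      + ennreal (h*(h^2/(real s)^2)*noise_const)"
    using step_size noise_const_nonneg by (intro nn_integral_affine_combination) auto
  finally show ?thesis .
qed

lemma error_fourth_moment:
  "(\<integral>\<^sup>+w. ennreal (norm (sgd k w - exact k w) ^ 4) \<partial>M) \<le> ennreal (error_const * h^2 / (real s)^2)"
proof (rule ennreal_affine_recursion_bound[where I="\<lambda>k. \<integral>\<^sup>+w. ennreal (norm (sgd k w - exact k w) ^ 4) \<partial>M"
      and J="\<lambda>k. \<integral>\<^sup>+w. ennreal (norm (exact k w) ^ 4) \<partial>M"])
  show "(1 - K*h/4) * (error_const * h^2 / (real s)^2)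
      + 8*h*(h^2/(real s)^2)*noise_const * exact_moment_const + h*(h^2/(real s)^2)*noise_const
      \<le> error_const * h^2 / (real s)^2"
    using K_pos s_pos by (simp add: error_const_def field_simps)
qed (use error_fourth_moment_step exact_chain_fourth_moment step_size noise_const_nonneg
      error_const_nonneg exact_moment_const_nonneg in auto)

end

theorem lemma8:
  fixes a :: "'a::euclidean_space \<Rightarrow> 'a"
    and b :: "'a \<Rightarrow> 'u::euclidean_space \<Rightarrow> 'a"
    and \<mu> :: "nat \<Rightarrow> 'u measure"
    and \<nu> :: "'a measure"
    and \<beta> :: real
  assumes beta: "\<beta> \<ge> 0"
    and b_meas: "(\<lambda>(x, u). b x u) \<in> borel_measurable borel"
    and a_meas: "a \<in> borel_measurable borel"
    and law: "\<And>s. s \<ge> 1 \<Longrightarrow> prob_space (\<mu> s) \<and> sets (\<mu> s) = sets borel"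
    and unbiased: "\<And>s x. s \<ge> 1 \<Longrightarrow> integrable (\<mu> s) (b x) \<and> (\<integral>u. b x u \<partial>\<mu> s) = a x"
    \<comment> \<open>(A1)\<close>
    and A1_lip: "\<exists>L. \<forall>x y. norm (a x - a y) \<le> L * norm (x - y)"
    and A1_mon: "\<exists>K>0. \<forall>x y. inner (x - y) (a x - a y) \<le> - K * (norm (x - y))\<^sup>2"
    and A1_C2: "\<exists>Da D2a Ca1 Ca2.
        (\<forall>x. (a has_derivative Da x) (at x))
      \<and> (\<forall>x v. ((\<lambda>y. Da y v) has_derivative D2a x v) (at x))
      \<and> (\<forall>v w. continuous_on UNIV (\<lambda>x. D2a x v w))
      \<and> (\<forall>x. \<forall>i\<in>Basis. norm (Da x i) \<le> Ca1)
      \<and> (\<forall>x. \<forall>i\<in>Basis. \<forall>j\<in>Basis. norm (D2a x i j) \<le> Ca2)"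
    \<comment> \<open>(A3) and (A4), with a common constant kappa\<close>
    and A34: "\<exists>\<kappa> \<sigma>2 \<sigma>4.
        (\<forall>s\<ge>1. \<sigma>2 s \<le> \<kappa> / real s \<and> \<sigma>4 s \<le> \<kappa> / (real s)\<^sup>2)
      \<and> (\<forall>s\<ge>1. \<forall>x. (\<integral>\<^sup>+u. ennreal ((norm (b x u - a x))\<^sup>2) \<partial>\<mu> s)
                        \<le> ennreal (\<sigma>2 s * (1 + (norm x)\<^sup>2)))
      \<and> (\<forall>s\<ge>1. \<forall>x. (\<integral>\<^sup>+u. ennreal ((norm (b x u - a x)) ^ 4) \<partial>\<mu> s)
                        \<le> ennreal (\<sigma>4 s * (1 + (norm x) ^ 4)))"
    \<comment> \<open>(A7)\<close>
    and A7: "\<exists>L04. \<forall>x. (norm (a x)) ^ 4 \<le> L04 * (1 + (norm x) ^ 4)"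
    \<comment> \<open>law of the initial value X_0, with finite fourth moment\<close>
    and init_law: "prob_space \<nu>" "sets \<nu> = sets borel"
    and init_moment: "(\<integral>\<^sup>+x. ennreal ((norm x) ^ 4) \<partial>\<nu>) < \<infinity>"
  shows "\<exists>h0>0. \<exists>C>0. \<forall>s::nat. \<forall>h::real. \<forall>k::nat.
     \<forall>(M::'w measure) X0 Z U.
       s \<ge> 1 \<longrightarrow> 0 < h \<longrightarrow> h < h0 \<longrightarrow> k \<ge> 1 \<longrightarrow>
       prob_space M \<longrightarrow>
       X0 \<in> borel_measurable M \<longrightarrow> distr M borel X0 = \<nu> \<longrightarrow>
       (\<forall>j\<ge>1. distributed M lborel (Z j) std_gaussian_density) \<longrightarrow>
       (\<forall>j. U j \<in> borel_measurable M \<and> distr M borel (U j) = \<mu> (2 * s)) \<longrightarrow>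
       prob_space.indep_sets M (input_sigmas M X0 Z U) input_index \<longrightarrow>
       (\<integral>\<^sup>+w. ennreal ((norm (sgd_chain h \<beta> b X0 Z U k w - exact_chain h \<beta> a X0 Z k w)) ^ 4) \<partial>M)
         \<le> ennreal (C * h\<^sup>2 / (real s)\<^sup>2)"
proof -
  obtain L0 where lip0: "\<forall>x y. norm (a x - a y) \<le> L0 * norm (x - y)" using A1_lip by blast
  define L where "L = max L0 0"
  have lipschitz: "norm (a x - a y) \<le> L * norm (x - y)" for x y
    using lip0 mult_right_mono[of L0 L "norm (x - y)"] by (smt (verit) L_def norm_ge_zero)
  obtain K where K: "K > 0" and monotone: "\<forall>x y. inner (x - y) (a x - a y) \<le> - K * (norm (x - y))\<^sup>2"
    using A1_mon by blast
  obtain \<kappa>0 \<sigma>2 \<sigma>4 where \<sigma>: "\<forall>s\<ge>1. \<sigma>2 s \<le> \<kappa>0 / real s \<and> \<sigma>4 s \<le> \<kappa>0 / (real s)\<^sup>2"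
    and A3: "\<forall>s\<ge>1. \<forall>x. (\<integral>\<^sup>+u. ennreal ((norm (b x u - a x))\<^sup>2) \<partial>\<mu> s) \<le> ennreal (\<sigma>2 s * (1 + (norm x)\<^sup>2))"
    and A4: "\<forall>s\<ge>1. \<forall>x. (\<integral>\<^sup>+u. ennreal ((norm (b x u - a x)) ^ 4) \<partial>\<mu> s) \<le> ennreal (\<sigma>4 s * (1 + (norm x) ^ 4))"
    using A34 by blast
  define \<kappa> where "\<kappa> = max \<kappa>0 0"
  define m0 where "m0 = enn2real (\<integral>\<^sup>+x. ennreal (norm x ^ 4) \<partial>\<nu>)"
  define M4 where "M4 = enn2real (\<integral>\<^sup>+x. std_gaussian_density (x::'a) * ennreal (norm x ^ 4) \<partial>lborel)"
  interpret constants: fourth_moment_constants a K \<kappa> \<beta> m0 M4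
    using K by unfold_locales (auto simp: \<kappa>_def m0_def M4_def)
  show ?thesis
  proof (rule exI[of _ "constants.max_step L"], rule conjI, rule constants.max_step_pos,
      rule exI[of _ "constants.error_const + 1"], intro conjI allI impI)
    show "constants.error_const + 1 > 0" using constants.error_const_nonneg by simp
    fix s :: nat and h :: real and k :: nat and M :: "'w measure" and X0 Z U
    assume s: "s \<ge> 1" and h: "0 < h" "h < constants.max_step L" and "k \<ge> 1" and M: "prob_space M"
      and X0: "X0 \<in> borel_measurable M" "distr M borel X0 = \<nu>"
      and Z: "\<forall>j\<ge>1. distributed M lborel (Z j) std_gaussian_density"
      and U: "\<forall>j. U j \<in> borel_measurable M \<and> distr M borel (U j) = \<mu> (2 * s)"
      and indep: "prob_space.indep_sets M (input_sigmas M X0 Z U) input_index"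
    have s2: "2 * s \<ge> 1" using s by simp
    have noise_bounds: "\<sigma>2 (2 * s) \<le> \<kappa> / real s" "\<sigma>4 (2 * s) \<le> \<kappa> / (real s)^2"
    proof -
      have "\<sigma>2 (2 * s) \<le> \<kappa>0 / real (2 * s)" "\<sigma>4 (2 * s) \<le> \<kappa>0 / (real (2 * s))^2"
        using spec[OF \<sigma>, of "2 * s"] s2 by (simp_all del: of_nat_mult)
      moreover have "\<kappa>0 / real (2 * s) \<le> \<kappa> / real s" "\<kappa>0 / (real (2 * s))^2 \<le> \<kappa> / (real s)^2"
        using s by (simp_all add: \<kappa>_def field_simps power2_eq_square)
      ultimately show "\<sigma>2 (2 * s) \<le> \<kappa> / real s" "\<sigma>4 (2 * s) \<le> \<kappa> / (real s)^2" by auto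
    qed
    have "(\<integral>\<^sup>+w. ennreal (norm (X0 w) ^ 4) \<partial>M) = (\<integral>\<^sup>+x. ennreal (norm x ^ 4) \<partial>distr M borel X0)"
      using X0(1) by (simp add: nn_integral_distr)
    also have "\<dots> = ennreal m0" using init_moment X0(2) by (simp add: m0_def less_top)
    finally have initial: "(\<integral>\<^sup>+w. ennreal (norm (X0 w) ^ 4) \<partial>M) = ennreal m0" .
    have normalized: "(\<integral>\<^sup>+x. std_gaussian_density (x::'a) \<partial>lborel) = 1"
      using std_gaussian_density_normalized[OF M] Z by auto
    interpret coupled_chains a K \<kappa> \<beta> m0 M4 M b "\<mu> (2 * s)" L h s X0 Z U
    proof (intro coupled_chains.intro coupled_chains_axioms.intro M constants.fourth_moment_constants_axioms)
      show "(\<integral>\<^sup>+u. ennreal ((norm (b x u - a x))\<^sup>2) \<partial>\<mu> (2 * s)) \<le> ennreal (\<kappa> / real s * (1 + (norm x)\<^sup>2))"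
        for x by (rule ennreal_le_mult_right_mono[OF _ noise_bounds(1)]) (use A3 s2 in auto)
      show "(\<integral>\<^sup>+u. ennreal (norm (b x u - a x) ^ 4) \<partial>\<mu> (2 * s)) \<le> ennreal (\<kappa> / (real s)\<^sup>2 * (1 + norm x ^ 4))"
        for x by (rule ennreal_le_mult_right_mono[OF _ noise_bounds(2)]) (use A4 s2 in auto)
    next
      show "(\<integral>\<^sup>+x. std_gaussian_density (x::'a) * ennreal (norm x ^ 4) \<partial>lborel) = ennreal M4"
        using std_gaussian_fourth_moment_finite[OF normalized] by (simp add: M4_def less_top)
    qed (use a_meas b_meas lipschitz monotone unbiased[OF s2] s h X0 initial Z U indep in \<open>auto simp: L_def\<close>)
    have "(\<integral>\<^sup>+w. ennreal (norm (sgd k w - exact k w) ^ 4) \<partial>M) \<le> ennreal (constants.error_const * h^2 / (real s)^2)"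
      by (rule error_fourth_moment)
    also have "\<dots> \<le> ennreal ((constants.error_const + 1) * h^2 / (real s)^2)"
      by (intro ennreal_leI divide_right_mono mult_right_mono) auto
    finally show "(\<integral>\<^sup>+w. ennreal ((norm (sgd k w - exact k w)) ^ 4) \<partial>M)
        \<le> ennreal ((constants.error_const + 1) * h\<^sup>2 / (real s)\<^sup>2)" .
  qed
qed

end
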